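(* For any smooth complex-valued potential $V(t,x)$, the maximal Lie invariance algebra $\mathfrak g_V$ of the equation $i\psi_t+\psi_{xx}+V(t,x)\psi=0$ consists of the vector fields $Q=D(\tau)+G(\chi)+\sigma M+\rho I+Z(\eta^0)$, where $\tau,\chi,\rho,\sigma$ run through the smooth real-valued functions of $t$ satisfying $$\tau V_t+\Big(\frac12\tau_tx+\chi\Big)V_x+\tau_tV=\frac18\tau_{ttt}x^2+\frac12\chi_{tt}x+\sigma_t-i\rho_t-\frac i4\tau_{tt},$$ and $\eta^0=\eta^0(t,x)$ runs through the solution set of the equation $i\eta^0_t+\eta^0_{xx}+V\eta^0=0$.
   Context: Equations $i\psi_t+\psi_{xx}+V(t,x)\psi=0$ with $\psi$ an unknown complex-valued function of the real variables $t,x$ and $V$ a smooth complex-valued potential. The conjugate $\psi^*$ is treated as an additional dependent variable, and vector fields act on the space of $(t,x,\psi,\psi^* )$; the maximal Lie invariance algebra consists of the vector fields generating one-parameter point symmetry groups of the equation (together with its complex conjugate). Notation: $M=i\psi\partial_\psi-i\psi^*\partial_{\psi^*}$, $I=\psi\partial_\psi+\psi^*\partial_{\psi^*}$, $D(\tau)=\tau\partial_t+\frac12\tau_tx\partial_x+\frac18\tau_{tt}x^2M$, $G(\chi)=\chi\partial_x+\frac12\chi_txM$, $Z(\eta)=\eta\partial_\psi+\eta^*\partial_{\psi^*}$; $\sigma M$ and $\rho I$ mean $\sigma(t)M$ and $\rho(t)I$. *)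

theory Defs
  imports "HOL-Analysis.Analysis"
begin

fun Ck :: "nat \<Rightarrow> ('a::real_normed_vector \<Rightarrow> 'b::real_normed_vector) \<Rightarrow> bool" where
  "Ck 0 f = continuous_on UNIV f"
| "Ck (Suc n) f = ((\<forall>x. f differentiable (at x)) \<and>
                    (\<forall>v. Ck n (\<lambda>x. frechet_derivative f (at x) v)))"

definition smooth :: "('a::real_normed_vector \<Rightarrow> 'b::real_normed_vector) \<Rightarrow> bool" where
  "smooth f \<longleftrightarrow> (\<forall>n. Ck n f)"

definition pt :: "(real \<times> real \<Rightarrow> 'b::real_normed_vector) \<Rightarrow> real \<times> real \<Rightarrow> 'b" where
  "pt f p = vector_derivative (\<lambda>s. f (s, snd p)) (at (fst p))"

definition px :: "(real \<times> real \<Rightarrow> 'b::real_normed_vector) \<Rightarrow> real \<times> real \<Rightarrow> 'b" where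
  "px f p = vector_derivative (\<lambda>y. f (fst p, y)) (at (snd p))"

definition schr :: "(real \<times> real \<Rightarrow> complex) \<Rightarrow> (real \<times> real \<Rightarrow> complex) \<Rightarrow> real \<times> real \<Rightarrow> complex" where
  "schr V \<psi> p = \<i> * pt \<psi> p + px (px \<psi>) p + V p * \<psi> p"

text \<open>A (real) point vector field Q = tau d_t + xi d_x + eta d_psi + eta^* d_psi^* on the space
  of (t,x,psi,psi^*), with tau, xi real-valued and eta complex-valued functions of (t,x,psi)
  (dependence on psi^* is dependence on the complex number psi, viewed as a point of R^2).\<close>
definition charact ::
  "(real \<times> real \<times> complex \<Rightarrow> real) \<Rightarrow> (real \<times> real \<times> complex \<Rightarrow> real) \<Rightarrow>
   (real \<times> real \<times> complex \<Rightarrow> complex) \<Rightarrow> (real \<times> real \<Rightarrow> complex) \<Rightarrow> real \<times> real \<Rightarrow> complex" where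
  "charact \<tau> \<xi> \<eta> \<psi> p =
     \<eta> (fst p, snd p, \<psi> p) - of_real (\<tau> (fst p, snd p, \<psi> p)) * pt \<psi> p
                          - of_real (\<xi> (fst p, snd p, \<psi> p)) * px \<psi> p"

text \<open>Second prolongation of Q applied to E = i psi_t + psi_xx + V psi, evaluated at the
  2-jet of psi at p.  Standard formulas:
  eta^t = D_t Phi + tau psi_tt + xi psi_tx,  eta^xx = D_x^2 Phi + tau psi_txx + xi psi_xxx,
  where Phi is the characteristic; the third-order terms cancel, so the value depends only
  on the 2-jet of psi at p.\<close>
definition prol_E ::
  "(real \<times> real \<Rightarrow> complex) \<Rightarrow> (real \<times> real \<times> complex \<Rightarrow> real) \<Rightarrow> (real \<times> real \<times> complex \<Rightarrow> real) \<Rightarrow>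
   (real \<times> real \<times> complex \<Rightarrow> complex) \<Rightarrow> (real \<times> real \<Rightarrow> complex) \<Rightarrow> real \<times> real \<Rightarrow> complex" where
  "prol_E V \<tau> \<xi> \<eta> \<psi> p =
    (let T = of_real (\<tau> (fst p, snd p, \<psi> p)) :: complex;
         X = of_real (\<xi> (fst p, snd p, \<psi> p)) :: complex;
         \<Phi> = charact \<tau> \<xi> \<eta> \<psi>;
         eta_t = pt \<Phi> p + T * pt (pt \<psi>) p + X * px (pt \<psi>) p;
         eta_xx = px (px \<Phi>) p + T * pt (px (px \<psi>)) p + X * px (px (px \<psi>)) p
     in \<i> * eta_t + eta_xx + (T * pt V p + X * px V p) * \<psi> p + V p * \<eta> (fst p, snd p, \<psi> p))"

text \<open>Q belongs to the maximal Lie invariance algebra g_V: smooth components and the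
  infinitesimal invariance criterion Q^(2) E = 0 on the manifold E = 0 in the 2-jet space
  (every 2-jet is realised by a smooth, e.g. polynomial, function psi; the conjugate
  equation is then automatically satisfied as well).\<close>
definition in_lie_alg ::
  "(real \<times> real \<Rightarrow> complex) \<Rightarrow> (real \<times> real \<times> complex \<Rightarrow> real) \<Rightarrow> (real \<times> real \<times> complex \<Rightarrow> real) \<Rightarrow>
   (real \<times> real \<times> complex \<Rightarrow> complex) \<Rightarrow> bool" where
  "in_lie_alg V \<tau> \<xi> \<eta> \<longleftrightarrow> smooth \<tau> \<and> smooth \<xi> \<and> smooth \<eta> \<and>
     (\<forall>\<psi>. smooth \<psi> \<longrightarrow> (\<forall>p. schr V \<psi> p = 0 \<longrightarrow> prol_E V \<tau> \<xi> \<eta> \<psi> p = 0))"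

end

theory Submission
  imports Defs
begin

text \<open>Every 2-jet on \<open>E = i\<psi>\<^sub>t + \<psi>\<^sub>x\<^sub>x + V\<psi> = 0\<close> is the 2-jet of a quadratic polynomial, so the
  invariance criterion \<open>Q\<^sup>(\<^sup>2\<^sup>) E = 0\<close> becomes an identity in the free jet coordinates
  \<open>\<psi>, \<psi>\<^sub>t, \<psi>\<^sub>x, \<psi>\<^sub>t\<^sub>x\<close> (with \<open>\<psi>\<^sub>x\<^sub>x = -i\<psi>\<^sub>t - V\<psi>\<close>). Comparing coefficients gives the determining
  equations: \<open>\<tau>\<close> depends on \<open>t\<close> only, \<open>\<xi>\<^sub>x = \<tau>\<^sub>t/2\<close>, \<open>\<xi>\<^sub>\<psi> = 0\<close>, \<open>\<eta>\<close> is \<open>\<complex>\<close>-linear in the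
  \<open>\<psi>\<close>-direction, \<open>\<eta>\<^sub>\<psi>\<^sub>\<psi> = 0\<close> and \<open>2\<eta>\<^sub>\<psi>\<^sub>x = i\<xi>\<^sub>t\<close>. Integrating them along lines in
  \<open>(t, x, \<psi>)\<close>-space yields the form \<open>D(\<tau>) + G(\<chi>) + \<sigma>M + \<rho>I + Z(\<eta>\<^sup>0)\<close>. What is left of the criterion
  is affine in \<open>\<psi>\<close>: its constant term says that \<open>\<eta>\<^sup>0\<close> solves the equation, its \<open>\<psi>\<close>-coefficient is
  the condition on \<open>V\<close>. Conversely, for fields of this form \<open>Q\<^sup>(\<^sup>2\<^sup>) E\<close> is an explicit combination of
  \<open>E[\<psi>]\<close>, \<open>E[\<eta>\<^sup>0]\<close> and the defect of that condition.\<close>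

abbreviation dderiv :: "('a::real_normed_vector \<Rightarrow> 'b::real_normed_vector) \<Rightarrow> 'a \<Rightarrow> 'a \<Rightarrow> 'b" where
  "dderiv f v x \<equiv> frechet_derivative f (at x) v"

lemma dderiv_eqI: "(f has_derivative f') (at x) \<Longrightarrow> dderiv f v x = f' v"
  using frechet_derivative_at by metis

subsection \<open>Smooth maps\<close>

lemma Ck_Suc_imp_Ck: "Ck (Suc n) f \<Longrightarrow> Ck n f"
proof (induction n arbitrary: f)
  case 0
  then show ?case
    by (auto intro!: differentiable_imp_continuous_on simp: differentiable_on_def differentiable_at_withinI)
next
  case (Suc n)
  then show ?case by auto
qed

lemma smooth_differentiable: "smooth f \<Longrightarrow> f differentiable (at x)"
  unfolding smooth_def by (metis Ck.simps(2))

lemma smooth_has_derivative: "smooth f \<Longrightarrow> (f has_derivative frechet_derivative f (at x)) (at x)"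
  using smooth_differentiable frechet_derivative_works by blast

lemma smooth_dderiv: "smooth f \<Longrightarrow> smooth (\<lambda>x. dderiv f v x)"
  unfolding smooth_def by (metis Ck.simps(2))

lemma smooth_continuous_on: "smooth f \<Longrightarrow> continuous_on UNIV f"
  unfolding smooth_def by (metis Ck.simps(1))

lemma linear_dderiv: "smooth f \<Longrightarrow> linear (\<lambda>v. dderiv f v x)"
  using smooth_has_derivative has_derivative_linear by blast

lemma Ck_const: "Ck n (\<lambda>x. c)"
  by (induction n arbitrary: c) auto

lemma Ck_add: "Ck n f \<Longrightarrow> Ck n g \<Longrightarrow> Ck n (\<lambda>x. f x + g x)"
proof (induction n arbitrary: f g)
  case 0
  then show ?case by (auto intro: continuous_on_add)
next
  case (Suc n)
  have "dderiv (\<lambda>x. f x + g x) v x = dderiv f v x + dderiv g v x" for v x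
    using Suc.prems frechet_derivative_works by (intro dderiv_eqI has_derivative_add) auto
  then show ?case using Suc by auto
qed

lemma Ck_bilinear:
  assumes "bounded_bilinear pr"
  shows "Ck n f \<Longrightarrow> Ck n g \<Longrightarrow> Ck n (\<lambda>x. pr (f x) (g x))"
proof (induction n arbitrary: f g)
  case 0
  then show ?case using bounded_bilinear.continuous_on[OF assms] by auto
next
  case (Suc n)
  have df: "\<And>x. (f has_derivative frechet_derivative f (at x)) (at x)"
    and dg: "\<And>x. (g has_derivative frechet_derivative g (at x)) (at x)"
    and cf: "\<And>v. Ck n (\<lambda>x. dderiv f v x)" and cg: "\<And>v. Ck n (\<lambda>x. dderiv g v x)"
    using Suc.prems by (simp_all add: frechet_derivative_works[symmetric])
  have deriv: "((\<lambda>x. pr (f x) (g x)) has_derivative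
      (\<lambda>v. pr (f x) (dderiv g v x) + pr (dderiv f v x) (g x))) (at x)" for x
    by (rule bounded_bilinear.FDERIV[OF assms df dg])
  have "Ck n f" "Ck n g" using Suc.prems Ck_Suc_imp_Ck by blast+
  then have "Ck n (\<lambda>x. pr (f x) (dderiv g v x) + pr (dderiv f v x) (g x))" for v
    by (intro Ck_add Suc.IH cf cg)
  moreover have "(\<lambda>x. pr (f x) (g x)) differentiable (at x)" for x
    using deriv by (rule differentiableI)
  ultimately show ?case by (simp add: dderiv_eqI[OF deriv])
qed

lemma Ck_sum:
  fixes f :: "'i \<Rightarrow> 'a::real_normed_vector \<Rightarrow> 'b::real_normed_vector"
  shows "finite S \<Longrightarrow> (\<And>i. i \<in> S \<Longrightarrow> Ck n (f i)) \<Longrightarrow> Ck n (\<lambda>x. \<Sum>i\<in>S. f i x)"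
  by (induction S rule: finite_induct) (auto intro: Ck_add Ck_const)

lemma Ck_linear: "bounded_linear L \<Longrightarrow> Ck n L"
proof (induction n)
  case 0
  then show ?case by (simp add: linear_continuous_on)
next
  case (Suc n)
  have "dderiv L v x = L v" for v x
    using Suc.prems by (intro dderiv_eqI bounded_linear_imp_has_derivative)
  then show ?case using Suc.prems by (auto simp: Ck_const bounded_linear_imp_differentiable)
qed

text \<open>The chain rule expresses \<open>D(f \<circ> g) v\<close> as \<open>\<Sum>b. (Dg v \<bullet> b) Df b\<close>, a finite sum of
  bilinear expressions in derivatives of lower order; this needs a finite-dimensional middle space.\<close>

lemma Ck_compose:
  fixes f :: "'b::euclidean_space \<Rightarrow> 'c::real_normed_vector" and g :: "'a::real_normed_vector \<Rightarrow> 'b"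
  shows "Ck n f \<Longrightarrow> Ck n g \<Longrightarrow> Ck n (\<lambda>x. f (g x))"
proof (induction n arbitrary: f g)
  case 0
  then show ?case by (auto intro: continuous_on_compose2)
next
  case (Suc n)
  have df: "\<And>y. (f has_derivative frechet_derivative f (at y)) (at y)"
    and dg: "\<And>x. (g has_derivative frechet_derivative g (at x)) (at x)"
    and cf: "\<And>v. Ck n (\<lambda>x. dderiv f v x)" and cg: "\<And>v. Ck n (\<lambda>x. dderiv g v x)"
    using Suc.prems by (simp_all add: frechet_derivative_works[symmetric])
  have cg0: "Ck n g" using Suc.prems Ck_Suc_imp_Ck by blast
  have lin: "linear (frechet_derivative f (at y))" for y
    using df has_derivative_linear by blast
  have chain: "((\<lambda>x. f (g x)) has_derivative (\<lambda>v. dderiv f (dderiv g v x) (g x))) (at x)" for x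
    using diff_chain_at[OF dg df] by (simp add: o_def)
  have "dderiv (\<lambda>x. f (g x)) v x = (\<Sum>b\<in>Basis. (dderiv g v x \<bullet> b) *\<^sub>R dderiv f b (g x))" for v x
    unfolding dderiv_eqI[OF chain]
    by (subst euclidean_representation[symmetric, of "dderiv g v x"])
       (simp add: linear_sum[OF lin] linear_cmul[OF lin])
  moreover have "Ck n (\<lambda>x. \<Sum>b\<in>Basis. (dderiv g v x \<bullet> b) *\<^sub>R dderiv f b (g x))" for v
    by (intro Ck_sum finite_Basis Ck_bilinear[OF bounded_bilinear_scaleR]
        Ck_bilinear[OF bounded_bilinear_inner] Ck_const cg Suc.IH cf cg0)
  moreover have "(\<lambda>x. f (g x)) differentiable (at x)" for x
    using chain by (rule differentiableI)
  ultimately show ?case by simp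
qed

lemma smooth_const [simp]: "smooth (\<lambda>x. c)"
  by (simp add: smooth_def Ck_const)

lemma smooth_linear: "bounded_linear L \<Longrightarrow> smooth L"
  by (simp add: smooth_def Ck_linear)

lemma smooth_add: "smooth f \<Longrightarrow> smooth g \<Longrightarrow> smooth (\<lambda>x. f x + g x)"
  by (simp add: smooth_def Ck_add)

lemma smooth_bilinear:
  "bounded_bilinear pr \<Longrightarrow> smooth f \<Longrightarrow> smooth g \<Longrightarrow> smooth (\<lambda>x. pr (f x) (g x))"
  by (simp add: smooth_def Ck_bilinear)

lemma smooth_compose:
  fixes f :: "'b::euclidean_space \<Rightarrow> 'c::real_normed_vector" and g :: "'a::real_normed_vector \<Rightarrow> 'b"
  shows "smooth f \<Longrightarrow> smooth g \<Longrightarrow> smooth (\<lambda>x. f (g x))"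
  by (simp add: smooth_def Ck_compose)

lemma smooth_mult: "smooth f \<Longrightarrow> smooth g \<Longrightarrow> smooth (\<lambda>x. f x * (g x :: 'b::real_normed_algebra))"
  by (rule smooth_bilinear[OF bounded_bilinear_mult])

lemma smooth_scaleR: "smooth f \<Longrightarrow> smooth g \<Longrightarrow> smooth (\<lambda>x. f x *\<^sub>R g x)"
  by (rule smooth_bilinear[OF bounded_bilinear_scaleR])

lemma smooth_diff: "smooth f \<Longrightarrow> smooth g \<Longrightarrow> smooth (\<lambda>x. f x - g x)"
  using smooth_add[of f "\<lambda>x. (-1) *\<^sub>R g x"] smooth_scaleR[of "\<lambda>x. -1" g] by simp

lemma smooth_of_real: "smooth g \<Longrightarrow> smooth (\<lambda>x. of_real (g x) :: 'b::real_normed_algebra_1)"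
  by (rule smooth_compose[OF smooth_linear[OF bounded_linear_of_real]])

lemma smooth_fst: "smooth fst"
  by (rule smooth_linear[OF bounded_linear_fst])

lemma smooth_snd: "smooth snd"
  by (rule smooth_linear[OF bounded_linear_snd])

lemma smooth_time_axis: "smooth (\<lambda>t::real. (t, 0::real, 0::complex))"
  by (rule smooth_linear) (intro bounded_linear_Pair bounded_linear_ident bounded_linear_zero)

lemma smooth_has_real_derivative:
  fixes T :: "real \<Rightarrow> real"
  shows "smooth T \<Longrightarrow> (T has_real_derivative deriv T t) (at t)"
  using smooth_differentiable DERIV_deriv_iff_real_differentiable by blast

lemma smooth_deriv:
  fixes T :: "real \<Rightarrow> real"
  assumes "smooth T"
  shows "smooth (deriv T)"
proof -
  have "deriv T t = dderiv T 1 t" for t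
    using dderiv_eqI[OF smooth_has_real_derivative[OF assms, unfolded has_field_derivative_def], where v=1]
    by simp
  then have "deriv T = (\<lambda>t. dderiv T 1 t)" by auto
  then show ?thesis using smooth_dderiv[OF assms] by simp
qed

lemma dderiv_const_mult:
  fixes g :: "'a::real_normed_vector \<Rightarrow> 'b::real_normed_algebra"
  shows "smooth g \<Longrightarrow> dderiv (\<lambda>w. u * g w) v w = u * dderiv g v w"
  by (intro dderiv_eqI has_derivative_mult_right smooth_has_derivative)

lemma has_vector_derivative_line:
  assumes "smooth F"
  shows "((\<lambda>s. F (x + s *\<^sub>R v)) has_vector_derivative dderiv F v (x + s *\<^sub>R v)) (at s)"
proof -
  have "((\<lambda>s. x + s *\<^sub>R v) has_vector_derivative v) (at s)"
    by (auto intro!: derivative_eq_intros)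
  moreover have "(F has_derivative frechet_derivative F (at (x + s *\<^sub>R v)))
      (at (x + s *\<^sub>R v) within range (\<lambda>s. x + s *\<^sub>R v))"
    using assms smooth_has_derivative has_derivative_at_withinI by blast
  ultimately show ?thesis using vector_derivative_diff_chain_within by (force simp: o_def)
qed

lemma dderiv_line_eqI:
  assumes "smooth F" "((\<lambda>s. F (x + s *\<^sub>R v)) has_vector_derivative D) (at s)"
  shows "dderiv F v (x + s *\<^sub>R v) = D"
  using vector_derivative_unique_at[OF has_vector_derivative_line[OF assms(1)] assms(2)] .

lemma has_vector_derivative_compose_smooth:
  assumes "smooth G" "(\<gamma> has_vector_derivative v) (at s)"
  shows "((\<lambda>s. G (\<gamma> s)) has_vector_derivative dderiv G v (\<gamma> s)) (at s)"
proof -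
  have "(G has_derivative frechet_derivative G (at (\<gamma> s))) (at (\<gamma> s) within range \<gamma>)"
    using assms(1) smooth_has_derivative has_derivative_at_withinI by blast
  from vector_derivative_diff_chain_within[OF assms(2) this] show ?thesis by (simp add: o_def)
qed

lemma has_real_derivative_compose_smooth:
  fixes G :: "'a::real_normed_vector \<Rightarrow> real"
  assumes "smooth G" "(\<gamma> has_vector_derivative v) (at s)"
  shows "((\<lambda>s. G (\<gamma> s)) has_real_derivative dderiv G v (\<gamma> s)) (at s)"
  using has_vector_derivative_compose_smooth[OF assms]
  by (simp add: has_real_derivative_iff_has_vector_derivative)

lemma line_increment_affine:
  assumes "smooth F" "\<And>s. dderiv F v (x + s *\<^sub>R v) = k + s *\<^sub>R l"
  shows "F (x + v) = F x + k + (1/2) *\<^sub>R l"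
proof -
  define g where "g s = F (x + s *\<^sub>R v) - s *\<^sub>R k - (s * s / 2) *\<^sub>R l" for s
  have "((\<lambda>s. s *\<^sub>R k) has_vector_derivative k) (at s)"
    and "((\<lambda>s. (s * s / 2) *\<^sub>R l) has_vector_derivative s *\<^sub>R l) (at s)" for s
    by (rule derivative_eq_intros refl | force)+
  then have "(g has_vector_derivative (dderiv F v (x + s *\<^sub>R v) - k - s *\<^sub>R l)) (at s)" for s
    unfolding g_def by (intro has_vector_derivative_diff has_vector_derivative_line[OF assms(1)])
  then have "(g has_derivative (\<lambda>h. 0)) (at s within UNIV)" for s
    using assms(2) by (simp add: has_vector_derivative_def)
  from has_derivative_zero_unique[OF convex_UNIV this, of 1 0]
  show ?thesis unfolding g_def by (simp add: algebra_simps)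
qed

lemma line_increment_const:
  assumes "smooth F" "\<And>s. dderiv F v (x + s *\<^sub>R v) = k"
  shows "F (x + v) = F x + k"
  using line_increment_affine[OF assms(1), where k=k and l=0] assms(2) by simp

subsection \<open>Symmetry of second derivatives\<close>

lemma second_difference_mvt:
  fixes f :: "'a::real_normed_vector \<Rightarrow> real"
  assumes "smooth f" "h > 0"
  shows "\<exists>s t. 0 < s \<and> s < h \<and> 0 < t \<and> t < h \<and>
    f (x + h *\<^sub>R b + h *\<^sub>R a) - f (x + h *\<^sub>R a) - f (x + h *\<^sub>R b) + f x
      = h * h * dderiv (\<lambda>y. dderiv f a y) b (x + s *\<^sub>R a + t *\<^sub>R b)"
proof -
  have fa: "smooth (\<lambda>y. dderiv f a y)" using assms smooth_dderiv by blast
  define \<phi> where "\<phi> s = f ((x + h *\<^sub>R b) + s *\<^sub>R a) - f (x + s *\<^sub>R a)" for s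
  have "(\<phi> has_real_derivative (dderiv f a ((x + h *\<^sub>R b) + s *\<^sub>R a) - dderiv f a (x + s *\<^sub>R a))) (at s)" for s
    unfolding \<phi>_def has_real_derivative_iff_has_vector_derivative
    by (intro has_vector_derivative_diff has_vector_derivative_line assms(1))
  then obtain s where s: "0 < s" "s < h"
    and e1: "\<phi> h - \<phi> 0 = h * (dderiv f a ((x + h *\<^sub>R b) + s *\<^sub>R a) - dderiv f a (x + s *\<^sub>R a))"
    using MVT2[OF assms(2), of \<phi> "\<lambda>s. dderiv f a ((x + h *\<^sub>R b) + s *\<^sub>R a) - dderiv f a (x + s *\<^sub>R a)"]
    by auto
  define \<psi> where "\<psi> t = dderiv f a ((x + s *\<^sub>R a) + t *\<^sub>R b)" for t
  have "(\<psi> has_real_derivative dderiv (\<lambda>y. dderiv f a y) b ((x + s *\<^sub>R a) + t *\<^sub>R b)) (at t)" for t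
    unfolding \<psi>_def has_real_derivative_iff_has_vector_derivative
    by (rule has_vector_derivative_line[OF fa])
  then obtain t where t: "0 < t" "t < h"
    and e2: "\<psi> h - \<psi> 0 = h * dderiv (\<lambda>y. dderiv f a y) b ((x + s *\<^sub>R a) + t *\<^sub>R b)"
    using MVT2[OF assms(2), of \<psi> "\<lambda>t. dderiv (\<lambda>y. dderiv f a y) b ((x + s *\<^sub>R a) + t *\<^sub>R b)"]
    by auto
  have "\<psi> h = dderiv f a ((x + h *\<^sub>R b) + s *\<^sub>R a)"
    unfolding \<psi>_def by (simp add: algebra_simps)
  then have "\<phi> h - \<phi> 0 = h * h * dderiv (\<lambda>y. dderiv f a y) b ((x + s *\<^sub>R a) + t *\<^sub>R b)"
    using e1 e2 by (simp add: \<psi>_def)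
  then show ?thesis using s t unfolding \<phi>_def by (intro exI[of _ s] exI[of _ t]) (simp add: algebra_simps)
qed

lemma second_derivatives_meet_near:
  fixes f :: "'a::real_normed_vector \<Rightarrow> real"
  assumes "smooth f" "h > 0"
  shows "\<exists>p q. dist p x \<le> h * (norm a + norm b) \<and> dist q x \<le> h * (norm a + norm b) \<and>
    dderiv (\<lambda>y. dderiv f a y) b p = dderiv (\<lambda>y. dderiv f b y) a q"
proof -
  have near: "dist (x + s *\<^sub>R u + t *\<^sub>R w) x \<le> h * (norm u + norm w)"
    if "0 < s" "s < h" "0 < t" "t < h" for s t u w
  proof -
    have "dist (x + s *\<^sub>R u + t *\<^sub>R w) x = norm (s *\<^sub>R u + t *\<^sub>R w)"
      by (simp add: dist_norm)
    also have "\<dots> \<le> s * norm u + t * norm w"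
      using that by (metis abs_of_pos norm_scaleR norm_triangle_ineq)
    also have "\<dots> \<le> h * norm u + h * norm w"
      using that by (intro add_mono mult_right_mono) auto
    finally show ?thesis by (simp add: algebra_simps)
  qed
  obtain s1 t1 where st1: "0 < s1" "s1 < h" "0 < t1" "t1 < h"
    and E1: "f (x + h *\<^sub>R b + h *\<^sub>R a) - f (x + h *\<^sub>R a) - f (x + h *\<^sub>R b) + f x
      = h * h * dderiv (\<lambda>y. dderiv f a y) b (x + s1 *\<^sub>R a + t1 *\<^sub>R b)"
    using second_difference_mvt[OF assms, of x b a] by blast
  obtain s2 t2 where st2: "0 < s2" "s2 < h" "0 < t2" "t2 < h"
    and E2: "f (x + h *\<^sub>R a + h *\<^sub>R b) - f (x + h *\<^sub>R b) - f (x + h *\<^sub>R a) + f x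
      = h * h * dderiv (\<lambda>y. dderiv f b y) a (x + s2 *\<^sub>R b + t2 *\<^sub>R a)"
    using second_difference_mvt[OF assms, of x a b] by blast
  have "f (x + h *\<^sub>R a + h *\<^sub>R b) = f (x + h *\<^sub>R b + h *\<^sub>R a)"
    by (simp add: add_ac)
  then have "h * h * dderiv (\<lambda>y. dderiv f a y) b (x + s1 *\<^sub>R a + t1 *\<^sub>R b)
      = h * h * dderiv (\<lambda>y. dderiv f b y) a (x + s2 *\<^sub>R b + t2 *\<^sub>R a)"
    using E1 E2 by linarith
  then show ?thesis using assms(2) near[OF st1, of a b] near[OF st2, of b a]
    by (intro exI[of _ "x + s1 *\<^sub>R a + t1 *\<^sub>R b"] exI[of _ "x + s2 *\<^sub>R b + t2 *\<^sub>R a"]) (simp add: add.commute)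
qed

lemma dderiv_commute_real:
  fixes f :: "'a::real_normed_vector \<Rightarrow> real"
  assumes "smooth f"
  shows "dderiv (\<lambda>y. dderiv f a y) b x = dderiv (\<lambda>y. dderiv f b y) a x"
proof -
  define r :: "nat \<Rightarrow> real" where "r n = inverse (real (Suc n)) * (norm a + norm b)" for n
  have "\<forall>n. \<exists>p q. dist p x \<le> r n \<and> dist q x \<le> r n \<and>
      dderiv (\<lambda>y. dderiv f a y) b p = dderiv (\<lambda>y. dderiv f b y) a q"
    unfolding r_def using second_derivatives_meet_near[OF assms] by simp
  from this[THEN choice] obtain P where "\<forall>n. \<exists>q. dist (P n) x \<le> r n \<and> dist q x \<le> r n \<and>
      dderiv (\<lambda>y. dderiv f a y) b (P n) = dderiv (\<lambda>y. dderiv f b y) a q" ..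
  from this[THEN choice] obtain Q where PQ: "\<forall>n. dist (P n) x \<le> r n \<and> dist (Q n) x \<le> r n \<and>
      dderiv (\<lambda>y. dderiv f a y) b (P n) = dderiv (\<lambda>y. dderiv f b y) a (Q n)" ..
  have r: "r \<longlonglongrightarrow> 0"
    unfolding r_def using tendsto_mult_left_zero[OF LIMSEQ_inverse_real_of_nat] .
  have "(\<lambda>n. dist (P n) x) \<longlonglongrightarrow> 0" "(\<lambda>n. dist (Q n) x) \<longlonglongrightarrow> 0"
    using PQ by (auto intro!: Lim_null_comparison[OF always_eventually r])
  then have P: "P \<longlonglongrightarrow> x" and Q: "Q \<longlonglongrightarrow> x"
    by (auto intro: tendsto_dist_iff[THEN iffD2])
  have cont: "isCont (\<lambda>y. dderiv (\<lambda>y. dderiv f u y) w y) x" for u w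
    using smooth_continuous_on[OF smooth_dderiv[OF smooth_dderiv[OF assms]]]
    by (simp add: continuous_on_eq_continuous_at)
  have "(\<lambda>n. dderiv (\<lambda>y. dderiv f a y) b (P n)) \<longlonglongrightarrow> dderiv (\<lambda>y. dderiv f b y) a x"
    unfolding PQ[rule_format, THEN conjunct2, THEN conjunct2] by (rule isCont_tendsto_compose[OF cont Q])
  with isCont_tendsto_compose[OF cont P] show ?thesis
    by (rule LIMSEQ_unique)
qed

lemma dderiv_inner_left:
  "smooth F \<Longrightarrow> dderiv (\<lambda>y. F y \<bullet> e) v x = dderiv F v x \<bullet> e"
  by (intro dderiv_eqI has_derivative_inner_left smooth_has_derivative)

lemma dderiv_commute:
  fixes F :: "'a::real_normed_vector \<Rightarrow> 'b::euclidean_space"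
  assumes "smooth F"
  shows "dderiv (\<lambda>y. dderiv F a y) b x = dderiv (\<lambda>y. dderiv F b y) a x"
proof (rule euclidean_eqI)
  fix e :: 'b
  have Fe: "smooth (\<lambda>y. F y \<bullet> e)"
    using smooth_bilinear[OF bounded_bilinear_inner assms smooth_const] .
  have "dderiv (\<lambda>y. dderiv F u y) w x \<bullet> e = dderiv (\<lambda>y. dderiv (\<lambda>z. F z \<bullet> e) u y) w x" for u w
    by (simp add: dderiv_inner_left assms smooth_dderiv)
  then show "dderiv (\<lambda>y. dderiv F a y) b x \<bullet> e = dderiv (\<lambda>y. dderiv F b y) a x \<bullet> e"
    using dderiv_commute_real[OF Fe] by simp
qed

lemma pt_eqI: "((\<lambda>s. f (s, snd p)) has_vector_derivative D) (at (fst p)) \<Longrightarrow> pt f p = D"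
  by (simp add: pt_def vector_derivative_at)

lemma px_eqI: "((\<lambda>y. f (fst p, y)) has_vector_derivative D) (at (snd p)) \<Longrightarrow> px f p = D"
  by (simp add: px_def vector_derivative_at)

lemma pt_eq_dderiv: "smooth f \<Longrightarrow> pt f = (\<lambda>p. dderiv f (1, 0) p)"
proof
  fix p :: "real \<times> real" assume "smooth f"
  from has_vector_derivative_line[OF this, of "(0, snd p)" "(1, 0)" "fst p"]
  show "pt f p = dderiv f (1, 0) p" by (intro pt_eqI) simp
qed

lemma px_eq_dderiv: "smooth f \<Longrightarrow> px f = (\<lambda>p. dderiv f (0, 1) p)"
proof
  fix p :: "real \<times> real" assume "smooth f"
  from has_vector_derivative_line[OF this, of "(fst p, 0)" "(0, 1)" "snd p"]
  show "px f p = dderiv f (0, 1) p" by (intro px_eqI) simp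
qed

lemma has_vector_derivative_pt:
  "smooth f \<Longrightarrow> ((\<lambda>s. f (s, x)) has_vector_derivative pt f (s, x)) (at s)"
  using has_vector_derivative_line[of f "(0, x)" "(1, 0)" s] by (simp add: pt_eq_dderiv)

lemma has_vector_derivative_px:
  "smooth f \<Longrightarrow> ((\<lambda>y. f (t, y)) has_vector_derivative px f (t, y)) (at y)"
  using has_vector_derivative_line[of f "(t, 0)" "(0, 1)" y] by (simp add: px_eq_dderiv)

lemma smooth_pt: "smooth f \<Longrightarrow> smooth (pt f)"
  by (simp add: pt_eq_dderiv smooth_dderiv)

lemma smooth_px: "smooth f \<Longrightarrow> smooth (px f)"
  by (simp add: px_eq_dderiv smooth_dderiv)

lemma pt_px_commute:
  fixes f :: "real \<times> real \<Rightarrow> 'b::euclidean_space"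
  assumes "smooth f"
  shows "pt (px f) = px (pt f)"
proof -
  have "pt (px f) = (\<lambda>p. dderiv (px f) (1, 0) p)" by (rule pt_eq_dderiv[OF smooth_px[OF assms]])
  also have "\<dots> = (\<lambda>p. dderiv (\<lambda>q. dderiv f (0, 1) q) (1, 0) p)" by (simp only: px_eq_dderiv[OF assms])
  also have "\<dots> = (\<lambda>p. dderiv (\<lambda>q. dderiv f (1, 0) q) (0, 1) p)" by (simp only: dderiv_commute[OF assms])
  also have "\<dots> = (\<lambda>p. dderiv (pt f) (0, 1) p)" by (simp only: pt_eq_dderiv[OF assms])
  also have "\<dots> = px (pt f)" by (rule px_eq_dderiv[OF smooth_pt[OF assms], symmetric])
  finally show ?thesis .
qed

subsection \<open>The determining equations\<close>

lemma dderiv_coordinates: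
  fixes G :: "real \<times> real \<times> complex \<Rightarrow> 'b::real_normed_vector"
  assumes "smooth G"
  shows "dderiv G (\<alpha>, \<beta>, u) w = \<alpha> *\<^sub>R dderiv G (1, 0, 0) w + \<beta> *\<^sub>R dderiv G (0, 1, 0) w
     + Re u *\<^sub>R dderiv G (0, 0, 1) w + Im u *\<^sub>R dderiv G (0, 0, \<i>) w"
proof -
  have lin: "linear (\<lambda>v. dderiv G v w)" using linear_dderiv[OF assms] .
  have "(\<alpha>, \<beta>, u) = \<alpha> *\<^sub>R (1, 0, 0) + \<beta> *\<^sub>R (0, 1, 0) + Re u *\<^sub>R (0, 0, 1) + Im u *\<^sub>R (0::real, 0::real, \<i>)"
    by (simp add: complex_eq_iff)
  then show ?thesis by (simp only: linear_add[OF lin] linear_scale[OF lin])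
qed

lemma dderiv_coordinates_complex:
  fixes G :: "real \<times> real \<times> complex \<Rightarrow> complex"
  assumes "smooth G"
  shows "dderiv G (\<alpha>, \<beta>, u) w = of_real \<alpha> * dderiv G (1, 0, 0) w + of_real \<beta> * dderiv G (0, 1, 0) w
     + of_real (Re u) * dderiv G (0, 0, 1) w + of_real (Im u) * dderiv G (0, 0, \<i>) w"
  using dderiv_coordinates[OF assms, of w \<alpha> \<beta> u] by (simp add: scaleR_conv_of_real)

lemma dderiv_coordinates_real:
  fixes G :: "real \<times> real \<times> complex \<Rightarrow> real"
  assumes "smooth G"
  shows "dderiv G (\<alpha>, \<beta>, u) w = \<alpha> * dderiv G (1, 0, 0) w + \<beta> * dderiv G (0, 1, 0) w
     + Re u * dderiv G (0, 0, 1) w + Im u * dderiv G (0, 0, \<i>) w"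
  using dderiv_coordinates[OF assms, of w \<alpha> \<beta> u] by simp

lemma dderiv_x_psi_split:
  fixes G :: "real \<times> real \<times> complex \<Rightarrow> 'b::real_normed_vector"
  assumes "smooth G"
  shows "dderiv G (0, 1, c + f * of_real r) w = dderiv G (0, 1, c) w + r *\<^sub>R dderiv G (0, 0, f) w"
proof -
  have lin: "linear (\<lambda>v. dderiv G v w)" using linear_dderiv[OF assms] .
  have "(0::real, 1::real, c + f * of_real r) = (0, 1, c) + r *\<^sub>R (0, 0, f)"
    by (simp add: scaleR_conv_of_real mult.commute)
  then show ?thesis by (simp only: linear_add[OF lin] linear_scale[OF lin])
qed

text \<open>The polynomial with prescribed 2-jet \<open>(\<psi>, \<psi>\<^sub>t, \<psi>\<^sub>x, \<psi>\<^sub>t\<^sub>x, \<psi>\<^sub>x\<^sub>x) = (z, a, c, e, f)\<close>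
  and \<open>\<psi>\<^sub>t\<^sub>t = 0\<close> at \<open>(t\<^sub>0, x\<^sub>0)\<close>; \<open>\<psi>\<^sub>t\<^sub>t\<close> does not enter the invariance criterion.\<close>

definition quadratic_jet ::
  "real \<Rightarrow> real \<Rightarrow> complex \<Rightarrow> complex \<Rightarrow> complex \<Rightarrow> complex \<Rightarrow> complex \<Rightarrow> real \<times> real \<Rightarrow> complex" where
  "quadratic_jet t0 x0 z a c e f q = z + a * of_real (fst q - t0) + c * of_real (snd q - x0)
      + e * of_real ((fst q - t0) * (snd q - x0)) + f * of_real ((snd q - x0)\<^sup>2 / 2)"

lemma quadratic_jet_center [simp]: "quadratic_jet t0 x0 z a c e f (t0, x0) = z"
  by (simp add: quadratic_jet_def)

lemma smooth_quadratic_jet: "smooth (quadratic_jet t0 x0 z a c e f)"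
proof -
  have "smooth (\<lambda>q::real \<times> real. fst q - t0)" "smooth (\<lambda>q::real \<times> real. snd q - x0)"
    by (intro smooth_diff smooth_fst smooth_snd smooth_const)+
  then have "smooth (\<lambda>q. z + a * of_real (fst q - t0) + c * of_real (snd q - x0)
      + e * of_real ((fst q - t0) * (snd q - x0)) + f * of_real ((snd q - x0) * (snd q - x0) * (1/2)))"
    by (intro smooth_add smooth_mult smooth_const smooth_of_real)
  then show ?thesis by (simp add: quadratic_jet_def[abs_def] power2_eq_square)
qed

lemma has_vector_derivative_quadratic_jet_t:
  "((\<lambda>s. quadratic_jet t0 x0 z a c e f (s, y)) has_vector_derivative a + e * of_real (y - x0)) (at s)"
  unfolding quadratic_jet_def fst_conv snd_conv by (rule derivative_eq_intros refl | force)+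

lemma has_vector_derivative_quadratic_jet_x:
  "((\<lambda>y. quadratic_jet t0 x0 z a c e f (s, y)) has_vector_derivative
      c + e * of_real (s - t0) + f * of_real (y - x0)) (at y)"
  unfolding quadratic_jet_def fst_conv snd_conv by (rule derivative_eq_intros refl | force)+

lemma pt_quadratic_jet: "pt (quadratic_jet t0 x0 z a c e f) = (\<lambda>q. a + e * of_real (snd q - x0))"
  by (rule ext, rule pt_eqI, rule has_vector_derivative_quadratic_jet_t)

lemma px_quadratic_jet:
  "px (quadratic_jet t0 x0 z a c e f) = (\<lambda>q. c + e * of_real (fst q - t0) + f * of_real (snd q - x0))"
  by (rule ext, rule px_eqI, rule has_vector_derivative_quadratic_jet_x)

lemma second_partials_quadratic_jet:
  shows "pt (pt (quadratic_jet t0 x0 z a c e f)) = (\<lambda>q. 0)"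
    and "px (pt (quadratic_jet t0 x0 z a c e f)) = (\<lambda>q. e)"
    and "px (px (quadratic_jet t0 x0 z a c e f)) = (\<lambda>q. f)"
  unfolding pt_quadratic_jet px_quadratic_jet
  by (rule ext, (rule pt_eqI | rule px_eqI), simp only: fst_conv snd_conv,
      (rule derivative_eq_intros refl | force)+)+

lemma partials_const: "pt (\<lambda>q. k) = (\<lambda>q. 0)" "px (\<lambda>q. k) = (\<lambda>q. 0)"
  by (auto simp: pt_def px_def)

lemma schr_quadratic_jet: "schr V (quadratic_jet t0 x0 z a c e f) (t0, x0) = \<i> * a + f + V (t0, x0) * z"
  by (simp add: schr_def pt_quadratic_jet second_partials_quadratic_jet)

lemma pt_charact_quadratic_jet:
  assumes st: "smooth tau" and sx: "smooth xi" and se: "smooth eta"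
  shows "pt (charact tau xi eta (quadratic_jet t0 x0 z a c e f)) (t0, x0) =
    dderiv eta (1, 0, a) (t0, x0, z) - of_real (dderiv tau (1, 0, a) (t0, x0, z)) * a
      - (of_real (dderiv xi (1, 0, a) (t0, x0, z)) * c + of_real (xi (t0, x0, z)) * e)"
proof -
  define \<gamma> where "\<gamma> s = (s, x0, quadratic_jet t0 x0 z a c e f (s, x0))" for s
  have "(\<gamma> has_vector_derivative (1, 0, a + e * of_real (x0 - x0))) (at s)" for s
    unfolding \<gamma>_def
    by (intro has_vector_derivative_Pair has_vector_derivative_id has_vector_derivative_const
        has_vector_derivative_quadratic_jet_t)
  then have \<gamma>': "(\<gamma> has_vector_derivative (1, 0, a)) (at s)" for s by simp
  have "(\<lambda>s. charact tau xi eta (quadratic_jet t0 x0 z a c e f) (s, x0))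
      = (\<lambda>s. eta (\<gamma> s) - of_real (tau (\<gamma> s)) * a - of_real (xi (\<gamma> s)) * (c + e * of_real (s - t0)))"
    by (simp add: fun_eq_iff charact_def \<gamma>_def pt_quadratic_jet px_quadratic_jet)
  moreover have "((\<lambda>s. eta (\<gamma> s) - of_real (tau (\<gamma> s)) * a - of_real (xi (\<gamma> s)) * (c + e * of_real (s - t0)))
      has_vector_derivative (dderiv eta (1, 0, a) (t0, x0, z) - of_real (dderiv tau (1, 0, a) (t0, x0, z)) * a
      - (of_real (dderiv xi (1, 0, a) (t0, x0, z)) * c + of_real (xi (t0, x0, z)) * e))) (at t0)"
    by (rule derivative_eq_intros has_vector_derivative_compose_smooth[OF se \<gamma>']
        has_real_derivative_compose_smooth[OF st \<gamma>'] has_real_derivative_compose_smooth[OF sx \<gamma>'] refl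
        | simp add: \<gamma>_def)+
  ultimately show ?thesis by (intro pt_eqI) simp
qed

lemma px_charact_quadratic_jet:
  fixes t0 x0 y :: real and z a c e f :: complex
  assumes st: "smooth tau" and sx: "smooth xi" and se: "smooth eta"
  defines "w \<equiv> (t0, y, quadratic_jet t0 x0 z a c e f (t0, y))"
  shows "px (charact tau xi eta (quadratic_jet t0 x0 z a c e f)) (t0, y) =
      (dderiv eta (0, 1, c) w + (y - x0) *\<^sub>R dderiv eta (0, 0, f) w)
      - (of_real (dderiv tau (0, 1, c) w + (y - x0) * dderiv tau (0, 0, f) w) * (a + e * of_real (y - x0))
         + of_real (tau w) * e)
      - (of_real (dderiv xi (0, 1, c) w + (y - x0) * dderiv xi (0, 0, f) w) * (c + f * of_real (y - x0))
         + of_real (xi w) * f)"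
proof -
  define \<gamma> where "\<gamma> y = (t0, y, quadratic_jet t0 x0 z a c e f (t0, y))" for y
  have "(\<gamma> has_vector_derivative (0, 1, c + e * of_real (t0 - t0) + f * of_real (y - x0))) (at y)" for y
    unfolding \<gamma>_def
    by (intro has_vector_derivative_Pair has_vector_derivative_id has_vector_derivative_const
        has_vector_derivative_quadratic_jet_x)
  then have \<gamma>': "(\<gamma> has_vector_derivative (0, 1, c + f * of_real (y - x0))) (at y)" for y by simp
  have "(\<lambda>y. charact tau xi eta (quadratic_jet t0 x0 z a c e f) (t0, y)) = (\<lambda>y. eta (\<gamma> y)
      - of_real (tau (\<gamma> y)) * (a + e * of_real (y - x0)) - of_real (xi (\<gamma> y)) * (c + f * of_real (y - x0)))"
    by (simp add: fun_eq_iff charact_def \<gamma>_def pt_quadratic_jet px_quadratic_jet)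
  moreover have "((\<lambda>y. eta (\<gamma> y) - of_real (tau (\<gamma> y)) * (a + e * of_real (y - x0))
      - of_real (xi (\<gamma> y)) * (c + f * of_real (y - x0))) has_vector_derivative
      dderiv eta (0, 1, c + f * of_real (y - x0)) (\<gamma> y)
      - (of_real (dderiv tau (0, 1, c + f * of_real (y - x0)) (\<gamma> y)) * (a + e * of_real (y - x0))
         + of_real (tau (\<gamma> y)) * e)
      - (of_real (dderiv xi (0, 1, c + f * of_real (y - x0)) (\<gamma> y)) * (c + f * of_real (y - x0))
         + of_real (xi (\<gamma> y)) * f)) (at y)" for y
    by (rule derivative_eq_intros has_vector_derivative_compose_smooth[OF se \<gamma>']
        has_real_derivative_compose_smooth[OF st \<gamma>'] has_real_derivative_compose_smooth[OF sx \<gamma>'] refl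
        | simp)+
  ultimately have "px (charact tau xi eta (quadratic_jet t0 x0 z a c e f)) (t0, y) =
      dderiv eta (0, 1, c + f * of_real (y - x0)) (\<gamma> y)
      - (of_real (dderiv tau (0, 1, c + f * of_real (y - x0)) (\<gamma> y)) * (a + e * of_real (y - x0))
         + of_real (tau (\<gamma> y)) * e)
      - (of_real (dderiv xi (0, 1, c + f * of_real (y - x0)) (\<gamma> y)) * (c + f * of_real (y - x0))
         + of_real (xi (\<gamma> y)) * f)"
    by (intro px_eqI) simp
  then show ?thesis
    unfolding dderiv_x_psi_split[OF se] dderiv_x_psi_split[OF st] dderiv_x_psi_split[OF sx] \<gamma>_def w_def by simp
qed

lemma pxx_charact_quadratic_jet:
  fixes t0 x0 :: real and z a c e f :: complex
  assumes st: "smooth tau" and sx: "smooth xi" and se: "smooth eta"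
  defines "w \<equiv> (t0, x0, z)"
  shows "px (px (charact tau xi eta (quadratic_jet t0 x0 z a c e f))) (t0, x0) =
      (dderiv (\<lambda>w. dderiv eta (0, 1, c) w) (0, 1, c) w + dderiv eta (0, 0, f) w)
      - of_real (dderiv (\<lambda>w. dderiv tau (0, 1, c) w) (0, 1, c) w + dderiv tau (0, 0, f) w) * a
      - 2 * e * of_real (dderiv tau (0, 1, c) w)
      - of_real (dderiv (\<lambda>w. dderiv xi (0, 1, c) w) (0, 1, c) w + dderiv xi (0, 0, f) w) * c
      - 2 * f * of_real (dderiv xi (0, 1, c) w)"
proof -
  define \<gamma> where "\<gamma> y = (t0, y, quadratic_jet t0 x0 z a c e f (t0, y))" for y
  have "(\<gamma> has_vector_derivative (0, 1, c)) (at x0)"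
    unfolding \<gamma>_def
    using has_vector_derivative_quadratic_jet_x[of t0 x0 z a c e f t0 x0]
    by (intro has_vector_derivative_Pair has_vector_derivative_id has_vector_derivative_const) simp
  note \<gamma>'0 = this
  have "px (charact tau xi eta (quadratic_jet t0 x0 z a c e f)) (t0, y) =
      (dderiv eta (0, 1, c) (\<gamma> y) + (y - x0) *\<^sub>R dderiv eta (0, 0, f) (\<gamma> y))
      - (of_real (dderiv tau (0, 1, c) (\<gamma> y) + (y - x0) * dderiv tau (0, 0, f) (\<gamma> y))
           * (a + e * of_real (y - x0)) + of_real (tau (\<gamma> y)) * e)
      - (of_real (dderiv xi (0, 1, c) (\<gamma> y) + (y - x0) * dderiv xi (0, 0, f) (\<gamma> y))
           * (c + f * of_real (y - x0)) + of_real (xi (\<gamma> y)) * f)" for y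
    unfolding \<gamma>_def by (rule px_charact_quadratic_jet[OF st sx se])
  moreover have "((\<lambda>y. (dderiv eta (0, 1, c) (\<gamma> y) + (y - x0) *\<^sub>R dderiv eta (0, 0, f) (\<gamma> y))
      - (of_real (dderiv tau (0, 1, c) (\<gamma> y) + (y - x0) * dderiv tau (0, 0, f) (\<gamma> y))
           * (a + e * of_real (y - x0)) + of_real (tau (\<gamma> y)) * e)
      - (of_real (dderiv xi (0, 1, c) (\<gamma> y) + (y - x0) * dderiv xi (0, 0, f) (\<gamma> y))
           * (c + f * of_real (y - x0)) + of_real (xi (\<gamma> y)) * f))
    has_vector_derivative
      (dderiv (\<lambda>w. dderiv eta (0, 1, c) w) (0, 1, c) w + dderiv eta (0, 0, f) w)
      - of_real (dderiv (\<lambda>w. dderiv tau (0, 1, c) w) (0, 1, c) w + dderiv tau (0, 0, f) w) * a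
      - 2 * e * of_real (dderiv tau (0, 1, c) w)
      - of_real (dderiv (\<lambda>w. dderiv xi (0, 1, c) w) (0, 1, c) w + dderiv xi (0, 0, f) w) * c
      - 2 * f * of_real (dderiv xi (0, 1, c) w)) (at x0)"
    by (rule derivative_eq_intros has_vector_derivative_compose_smooth[OF smooth_dderiv[OF se] \<gamma>'0]
        has_real_derivative_compose_smooth[OF smooth_dderiv[OF st] \<gamma>'0]
        has_real_derivative_compose_smooth[OF smooth_dderiv[OF sx] \<gamma>'0]
        has_real_derivative_compose_smooth[OF st \<gamma>'0] has_real_derivative_compose_smooth[OF sx \<gamma>'0] refl
        | simp add: \<gamma>_def w_def)+
  ultimately show ?thesis by (intro px_eqI) simp
qed

definition prol_jet ::
  "(real \<times> real \<Rightarrow> complex) \<Rightarrow> (real \<times> real \<times> complex \<Rightarrow> real) \<Rightarrow> (real \<times> real \<times> complex \<Rightarrow> real) \<Rightarrow>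
   (real \<times> real \<times> complex \<Rightarrow> complex) \<Rightarrow> real \<Rightarrow> real \<Rightarrow> complex \<Rightarrow> complex \<Rightarrow> complex \<Rightarrow> complex \<Rightarrow> complex \<Rightarrow>
   complex" where
  "prol_jet V tau xi eta t0 x0 z a c e f =
      \<i> * (dderiv eta (1, 0, a) (t0, x0, z) - of_real (dderiv tau (1, 0, a) (t0, x0, z)) * a
            - of_real (dderiv xi (1, 0, a) (t0, x0, z)) * c)
      + (dderiv (\<lambda>w. dderiv eta (0, 1, c) w) (0, 1, c) (t0, x0, z) + dderiv eta (0, 0, f) (t0, x0, z))
      - of_real (dderiv (\<lambda>w. dderiv tau (0, 1, c) w) (0, 1, c) (t0, x0, z) + dderiv tau (0, 0, f) (t0, x0, z)) * a
      - 2 * e * of_real (dderiv tau (0, 1, c) (t0, x0, z))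
      - of_real (dderiv (\<lambda>w. dderiv xi (0, 1, c) w) (0, 1, c) (t0, x0, z) + dderiv xi (0, 0, f) (t0, x0, z)) * c
      - 2 * f * of_real (dderiv xi (0, 1, c) (t0, x0, z))
      + (of_real (tau (t0, x0, z)) * pt V (t0, x0) + of_real (xi (t0, x0, z)) * px V (t0, x0)) * z
      + V (t0, x0) * eta (t0, x0, z)"

lemma prol_E_quadratic_jet:
  assumes "smooth tau" "smooth xi" "smooth eta"
  shows "prol_E V tau xi eta (quadratic_jet t0 x0 z a c e f) (t0, x0) = prol_jet V tau xi eta t0 x0 z a c e f"
  unfolding prol_E_def Let_def pt_charact_quadratic_jet[OF assms] pxx_charact_quadratic_jet[OF assms]
    second_partials_quadratic_jet partials_const prol_jet_def
  by (simp add: algebra_simps)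

text \<open>A 2-jet lies on the equation \<open>E = 0\<close> iff \<open>\<psi>\<^sub>x\<^sub>x = -i\<psi>\<^sub>t - V\<psi>\<close>, so the invariance criterion
  yields an identity in the remaining free jet coordinates \<open>(\<psi>, \<psi>\<^sub>t, \<psi>\<^sub>x, \<psi>\<^sub>t\<^sub>x)\<close>.\<close>

lemma prol_jet_eq_0:
  assumes "in_lie_alg V tau xi eta"
  shows "prol_jet V tau xi eta t0 x0 z a c e (- \<i> * a - V (t0, x0) * z) = 0"
proof -
  have "smooth tau" "smooth xi" "smooth eta"
    and invariance: "\<And>\<psi> p. smooth \<psi> \<Longrightarrow> schr V \<psi> p = 0 \<Longrightarrow> prol_E V tau xi eta \<psi> p = 0"
    using assms unfolding in_lie_alg_def by auto
  have "schr V (quadratic_jet t0 x0 z a c e (- \<i> * a - V (t0, x0) * z)) (t0, x0) = 0"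
    by (simp add: schr_quadratic_jet)
  from invariance[OF smooth_quadratic_jet this] show ?thesis
    by (simp add: prol_E_quadratic_jet \<open>smooth tau\<close> \<open>smooth xi\<close> \<open>smooth eta\<close>)
qed

locale lie_symmetry =
  fixes V :: "real \<times> real \<Rightarrow> complex"
    and tau xi :: "real \<times> real \<times> complex \<Rightarrow> real"
    and eta :: "real \<times> real \<times> complex \<Rightarrow> complex"
  assumes symmetry: "in_lie_alg V tau xi eta"
begin

lemma smooth_tau: "smooth tau" and smooth_xi: "smooth xi" and smooth_eta: "smooth eta"
  using symmetry unfolding in_lie_alg_def by auto

lemma determining_equation: "prol_jet V tau xi eta t0 x0 z a c e (- \<i> * a - V (t0, x0) * z) = 0"
  by (rule prol_jet_eq_0[OF symmetry])

definition tau0 :: "real \<Rightarrow> real" where "tau0 t = tau (t, 0, 0)"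

definition chi :: "real \<Rightarrow> real" where "chi t = xi (t, 0, 0)"

abbreviation eta_psi :: "real \<times> real \<times> complex \<Rightarrow> complex" where
  "eta_psi \<equiv> \<lambda>w. dderiv eta (0, 0, 1) w"

abbreviation eta_x :: "real \<times> real \<times> complex \<Rightarrow> complex" where
  "eta_x \<equiv> \<lambda>w. dderiv eta (0, 1, 0) w"

lemma smooth_tau0: "smooth tau0" and smooth_chi: "smooth chi"
  unfolding tau0_def[abs_def] chi_def[abs_def]
  by (rule smooth_compose[OF smooth_tau smooth_time_axis], rule smooth_compose[OF smooth_xi smooth_time_axis])

lemma smooth_eta_psi: "smooth eta_psi" and smooth_eta_x: "smooth eta_x"
  by (rule smooth_dderiv[OF smooth_eta])+

text \<open>This is the coefficient of \<open>\<psi>\<^sub>t\<^sub>x\<close> in the determining equation.\<close>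

lemma tau_dderiv_x_psi: "dderiv tau (0, 1, c) w = 0"
proof -
  obtain t0 x0 z where w: "w = (t0, x0, z)" by (cases w) auto
  have "prol_jet V tau xi eta t0 x0 z 0 c 1 (- V (t0, x0) * z) - prol_jet V tau xi eta t0 x0 z 0 c 0 (- V (t0, x0) * z)
      = - 2 * of_real (dderiv tau (0, 1, c) (t0, x0, z))"
    unfolding prol_jet_def by (simp add: algebra_simps)
  then show ?thesis using determining_equation[of t0 x0 z 0 c] by (simp add: w)
qed

lemma tau_eq: "tau (t, x, z) = tau0 t"
proof -
  have "dderiv tau (0, 0, 1) w = 0" "dderiv tau (0, 0, \<i>) w = 0" for w
    using dderiv_coordinates_real[OF smooth_tau, of w 0 1 1] dderiv_coordinates_real[OF smooth_tau, of w 0 1 \<i>]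
      tau_dderiv_x_psi[where c=0 and w=w] tau_dderiv_x_psi[where c=1 and w=w]
      tau_dderiv_x_psi[where c=\<i> and w=w]
    by simp_all
  then have "dderiv tau (0, x, z) w = 0" for w
    using dderiv_coordinates_real[OF smooth_tau, of w 0 x z] tau_dderiv_x_psi[where c=0] by simp
  then have "tau ((t, 0, 0) + (0, x, z)) = tau (t, 0, 0) + 0"
    by (intro line_increment_const smooth_tau)
  then show ?thesis by (simp add: tau0_def)
qed

lemma dderiv_tau: "dderiv tau v w = fst v * deriv tau0 (fst w)"
proof -
  have "tau = (\<lambda>w. tau0 (fst w))" using tau_eq by (auto simp: fun_eq_iff)
  moreover have "((\<lambda>w::real \<times> real \<times> complex. tau0 (fst w)) has_derivative (\<lambda>v. fst v * deriv tau0 (fst w))) (at w)"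
    by (rule DERIV_compose_FDERIV[OF smooth_has_real_derivative[OF smooth_tau0]])
       (rule has_derivative_fst[OF has_derivative_ident])
  ultimately show ?thesis by (simp add: dderiv_eqI)
qed

text \<open>The determining equation is \<open>\<real>\<close>-affine in \<open>\<psi>\<^sub>t\<close>; these are the \<open>\<complex>\<close>-antilinear and the
  \<open>\<complex>\<close>-linear part of its slope.\<close>

lemma determining_equation_psi_t:
  fixes t0 x0 :: real and z c :: complex
  defines "w \<equiv> (t0, x0, z)"
  shows "dderiv eta (0, 0, 1) w + \<i> * dderiv eta (0, 0, \<i>) w
           = c * (of_real (dderiv xi (0, 0, 1) w) + \<i> * of_real (dderiv xi (0, 0, \<i>) w))"
    and "deriv tau0 t0 = 2 * (dderiv xi (0, 1, 0) w + Re c * dderiv xi (0, 0, 1) w + Im c * dderiv xi (0, 0, \<i>) w)"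
proof -
  define P where "P a = prol_jet V tau xi eta t0 x0 z a c 0 (- \<i> * a - V (t0, x0) * z)" for a
  have P0: "P a = 0" for a unfolding P_def by (rule determining_equation)
  define \<eta>t \<eta>r \<eta>i where "\<eta>t = dderiv eta (1, 0, 0) w" and "\<eta>r = dderiv eta (0, 0, 1) w"
    and "\<eta>i = dderiv eta (0, 0, \<i>) w"
  define \<xi>t \<xi>x \<xi>r \<xi>i where "\<xi>t = dderiv xi (1, 0, 0) w" and "\<xi>x = dderiv xi (0, 1, 0) w"
    and "\<xi>r = dderiv xi (0, 0, 1) w" and "\<xi>i = dderiv xi (0, 0, \<i>) w"
  have "dderiv eta (1, 0, a) (t0, x0, z) = \<eta>t + of_real (Re a) * \<eta>r + of_real (Im a) * \<eta>i"
    and "dderiv eta (0, 0, f) (t0, x0, z) = of_real (Re f) * \<eta>r + of_real (Im f) * \<eta>i"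
    and "dderiv xi (1, 0, a) (t0, x0, z) = \<xi>t + Re a * \<xi>r + Im a * \<xi>i"
    and "dderiv xi (0, 0, f) (t0, x0, z) = Re f * \<xi>r + Im f * \<xi>i"
    and "dderiv xi (0, 1, c) (t0, x0, z) = \<xi>x + Re c * \<xi>r + Im c * \<xi>i" for a f
    unfolding \<eta>t_def \<eta>r_def \<eta>i_def \<xi>t_def \<xi>x_def \<xi>r_def \<xi>i_def w_def
    using dderiv_coordinates_complex[OF smooth_eta, of "(t0, x0, z)" 1 0 a]
      dderiv_coordinates_complex[OF smooth_eta, of "(t0, x0, z)" 0 0 f]
      dderiv_coordinates_real[OF smooth_xi, of "(t0, x0, z)" 1 0 a]
      dderiv_coordinates_real[OF smooth_xi, of "(t0, x0, z)" 0 0 f]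
      dderiv_coordinates_real[OF smooth_xi, of "(t0, x0, z)" 0 1 c]
    by simp_all
  note expand = this dderiv_tau
  have "P \<i> - P 0 - \<i> * (P 1 - P 0) = 2 * (\<eta>r + \<i> * \<eta>i - c * (of_real \<xi>r + \<i> * of_real \<xi>i))"
    unfolding P_def prol_jet_def expand by (simp add: algebra_simps)
  then have "\<eta>r + \<i> * \<eta>i - c * (of_real \<xi>r + \<i> * of_real \<xi>i) = 0"
    using P0 by (simp del: distrib_left_numeral right_diff_distrib_numeral)
  then show "dderiv eta (0, 0, 1) w + \<i> * dderiv eta (0, 0, \<i>) w
           = c * (of_real (dderiv xi (0, 0, 1) w) + \<i> * of_real (dderiv xi (0, 0, \<i>) w))"
    unfolding \<eta>r_def \<eta>i_def \<xi>r_def \<xi>i_def by simp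
  have "P \<i> - P 0 + \<i> * (P 1 - P 0) = 2 * of_real (deriv tau0 t0 - 2 * (\<xi>x + Re c * \<xi>r + Im c * \<xi>i))"
    unfolding P_def prol_jet_def expand by (simp add: algebra_simps)
  then have "2 * of_real (deriv tau0 t0 - 2 * (\<xi>x + Re c * \<xi>r + Im c * \<xi>i)) = (0::complex)"
    using P0 by simp
  then have "deriv tau0 t0 - 2 * (\<xi>x + Re c * \<xi>r + Im c * \<xi>i) = 0"
    by (simp only: mult_eq_0_iff of_real_eq_0_iff) simp
  then show "deriv tau0 t0 = 2 * (dderiv xi (0, 1, 0) w + Re c * dderiv xi (0, 0, 1) w + Im c * dderiv xi (0, 0, \<i>) w)"
    unfolding \<xi>x_def \<xi>r_def \<xi>i_def by simp
qed

lemma eta_dderiv_psi: "dderiv eta (0, 0, u) w = u * eta_psi w"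
proof -
  obtain t0 x0 z where w: "w = (t0, x0, z)" by (cases w) auto
  have "eta_psi w + \<i> * dderiv eta (0, 0, \<i>) w = 0"
    using determining_equation_psi_t(1)[of t0 x0 z 0] by (simp add: w)
  then have "dderiv eta (0, 0, \<i>) w = \<i> * eta_psi w"
    by (metis add.inverse_inverse i_squared minus_equation_iff mult.assoc mult_minus1 neg_eq_iff_add_eq_0)
  then show ?thesis
    using dderiv_coordinates_complex[OF smooth_eta, of w 0 0 u] by (simp add: algebra_simps complex_eq_iff)
qed

lemma xi_dderiv_psi: "dderiv xi (0, 0, u) w = 0"
proof -
  obtain t0 x0 z where w: "w = (t0, x0, z)" by (cases w) auto
  have "of_real (dderiv xi (0, 0, 1) w) + \<i> * of_real (dderiv xi (0, 0, \<i>) w) = (0::complex)"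
    using determining_equation_psi_t(1)[of t0 x0 z 0] determining_equation_psi_t(1)[of t0 x0 z 1]
    by (simp add: w)
  then have "dderiv xi (0, 0, 1) w = 0" "dderiv xi (0, 0, \<i>) w = 0"
    by (simp_all add: complex_eq_iff)
  then show ?thesis using dderiv_coordinates_real[OF smooth_xi, of w 0 0 u] by simp
qed

lemma xi_dderiv_x_psi: "dderiv xi (0, 1, u) w = deriv tau0 (fst w) / 2"
proof -
  obtain t0 x0 z where w: "w = (t0, x0, z)" by (cases w) auto
  have "deriv tau0 t0 = 2 * dderiv xi (0, 1, 0) w"
    using determining_equation_psi_t(2)[of t0 x0 z 0] by (simp add: w)
  then show ?thesis
    using dderiv_coordinates_real[OF smooth_xi, of w 0 1 u] by (simp add: xi_dderiv_psi w)
qed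

lemma xi_eq: "xi (t, x, z) = deriv tau0 t * x / 2 + chi t"
proof -
  have "dderiv xi (0, x, z) w = x * deriv tau0 (fst w) / 2" for w
    using dderiv_coordinates_real[OF smooth_xi, of w 0 x z] xi_dderiv_x_psi[where u=0] xi_dderiv_psi
    by simp
  then have "xi ((t, 0, 0) + (0, x, z)) = xi (t, 0, 0) + x * deriv tau0 t / 2"
    by (intro line_increment_const smooth_xi) simp
  then show ?thesis by (simp add: chi_def algebra_simps)
qed

lemma xi_dderiv_t: "dderiv xi (1, 0, 0) w = deriv (deriv tau0) (fst w) * fst (snd w) / 2 + deriv chi (fst w)"
proof -
  obtain t x z where w: "w = (t, x, z)" by (cases w) auto
  have "((\<lambda>s. deriv tau0 s * x / 2 + chi s) has_real_derivative
      deriv (deriv tau0) t * x / 2 + deriv chi t) (at t)"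
    using smooth_has_real_derivative[OF smooth_deriv[OF smooth_tau0]] smooth_has_real_derivative[OF smooth_chi]
    by (intro DERIV_add DERIV_cdivide DERIV_cmult_right)
  then have "((\<lambda>s. xi ((0, x, z) + s *\<^sub>R (1, 0, 0))) has_vector_derivative
      deriv (deriv tau0) t * x / 2 + deriv chi t) (at t)"
    by (simp add: xi_eq has_real_derivative_iff_has_vector_derivative)
  from dderiv_line_eqI[OF smooth_xi this] show ?thesis by (simp add: w)
qed

lemma xi_dderiv2_x_psi: "dderiv (\<lambda>w. dderiv xi (0, 1, c) w) (0, 1, c) w = 0"
proof -
  have "((\<lambda>s. dderiv xi (0, 1, c) (w + s *\<^sub>R (0, 1, c))) has_vector_derivative 0) (at 0)"
    by (simp add: xi_dderiv_x_psi)
  from dderiv_line_eqI[OF smooth_dderiv[OF smooth_xi] this] show ?thesis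
    by (simp only: scale_zero_left add_0_right)
qed

lemma eta_dderiv_psi_fun: "(\<lambda>w. dderiv eta (0, 0, u) w) = (\<lambda>w. u * eta_psi w)"
  by (rule ext, rule eta_dderiv_psi)

lemma eta_psi_dderiv_psi: "dderiv eta_psi (0, 0, u) w = u * dderiv eta_psi (0, 0, 1) w"
proof -
  have "dderiv eta_psi (0, 0, u) w = dderiv (\<lambda>w. dderiv eta (0, 0, u) w) (0, 0, 1) w"
    by (rule dderiv_commute[OF smooth_eta])
  also have "\<dots> = u * dderiv eta_psi (0, 0, 1) w"
    by (subst eta_dderiv_psi_fun) (rule dderiv_const_mult[OF smooth_eta_psi])
  finally show ?thesis .
qed

lemma eta_x_dderiv_psi: "dderiv eta_x (0, 0, u) w = u * dderiv eta_psi (0, 1, 0) w"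
proof -
  have "dderiv eta_x (0, 0, u) w = dderiv (\<lambda>w. dderiv eta (0, 0, u) w) (0, 1, 0) w"
    by (rule dderiv_commute[OF smooth_eta])
  also have "\<dots> = u * dderiv eta_psi (0, 1, 0) w"
    by (subst eta_dderiv_psi_fun) (rule dderiv_const_mult[OF smooth_eta_psi])
  finally show ?thesis .
qed

lemma eta_dderiv2_x_psi:
  "dderiv (\<lambda>w. dderiv eta (0, 1, c) w) (0, 1, c) w =
    dderiv eta_x (0, 1, 0) w + 2 * c * dderiv eta_psi (0, 1, 0) w + c * c * dderiv eta_psi (0, 0, 1) w"
proof -
  have "(\<lambda>w. dderiv eta (0, 1, c) w) = (\<lambda>w. eta_x w + c * eta_psi w)"
  proof
    fix w
    show "dderiv eta (0, 1, c) w = eta_x w + c * eta_psi w"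
      using dderiv_coordinates_complex[OF smooth_eta, of w 0 1 c] eta_dderiv_psi[where u=1 and w=w]
        eta_dderiv_psi[where u=\<i> and w=w] dderiv_coordinates_complex[OF smooth_eta, of w 0 0 c]
      by (simp add: algebra_simps complex_eq_iff)
  qed
  then have "dderiv (\<lambda>w. dderiv eta (0, 1, c) w) (0, 1, c) w
      = dderiv eta_x (0, 1, c) w + c * dderiv eta_psi (0, 1, c) w"
    using dderiv_eqI[OF has_derivative_add[OF smooth_has_derivative[OF smooth_eta_x]
          has_derivative_mult_right[OF smooth_has_derivative[OF smooth_eta_psi]]]]
    by simp
  also have "dderiv eta_x (0, 1, c) w = dderiv eta_x (0, 1, 0) w + c * dderiv eta_psi (0, 1, 0) w"
    using dderiv_coordinates_complex[OF smooth_eta_x, of w 0 1 c] eta_x_dderiv_psi[where u=1 and w=w] eta_x_dderiv_psi[where u=\<i> and w=w]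
      dderiv_coordinates_complex[OF smooth_eta_x, of w 0 0 c] eta_x_dderiv_psi[where u=c and w=w]
    by (simp add: algebra_simps complex_eq_iff)
  also have "dderiv eta_psi (0, 1, c) w = dderiv eta_psi (0, 1, 0) w + c * dderiv eta_psi (0, 0, 1) w"
    using dderiv_coordinates_complex[OF smooth_eta_psi, of w 0 1 c] eta_psi_dderiv_psi[where u=\<i> and w=w]
    by (simp add: algebra_simps complex_eq_iff)
  finally show ?thesis by (simp add: algebra_simps)
qed

text \<open>With \<open>\<psi>\<^sub>t = \<psi>\<^sub>t\<^sub>x = 0\<close> the determining equation is a quadratic polynomial in \<open>\<psi>\<^sub>x\<close>.\<close>

lemma determining_equation_psi_x:
  shows eta_psi_dderiv_psi_eq_0: "dderiv eta_psi (0, 0, 1) w = 0"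
    and eta_psi_dderiv_x: "2 * dderiv eta_psi (0, 1, 0) w = \<i> * of_real (dderiv xi (1, 0, 0) w)"
proof -
  obtain t0 x0 z where w: "w = (t0, x0, z)" by (cases w) auto
  define P where "P c = prol_jet V tau xi eta t0 x0 z 0 c 0 (- \<i> * 0 - V (t0, x0) * z)" for c
  have P0: "P c = 0" for c unfolding P_def by (rule determining_equation)
  define B where "B = 2 * dderiv eta_psi (0, 1, 0) w - \<i> * of_real (dderiv xi (1, 0, 0) w)"
  define E where "E = dderiv eta_psi (0, 0, 1) w"
  have D: "P c - P 0 = c * B + c * c * E" for c
    unfolding P_def prol_jet_def xi_dderiv2_x_psi eta_dderiv2_x_psi[of c] B_def E_def w
    by (simp add: dderiv_tau xi_dderiv_x_psi xi_dderiv_psi algebra_simps)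
  have "B + E = 0" "- B + E = 0"
    using D[of 1] D[of "-1"] P0 by simp_all
  then have "E = 0" "B = 0" by (simp_all add: algebra_simps)
  then show "dderiv eta_psi (0, 0, 1) w = 0"
    and "2 * dderiv eta_psi (0, 1, 0) w = \<i> * of_real (dderiv xi (1, 0, 0) w)"
    unfolding E_def B_def by simp_all
qed

lemma eta_psi_eq:
  "eta_psi (t, x, z) = eta_psi (t, 0, 0) + \<i> * of_real (deriv (deriv tau0) t * x\<^sup>2 / 8 + deriv chi t * x / 2)"
proof -
  have "dderiv eta_psi (0, x, z) ((t, 0, 0) + s *\<^sub>R (0, x, z))
      = \<i> * of_real (deriv chi t * x / 2) + s *\<^sub>R (\<i> * of_real (deriv (deriv tau0) t * x\<^sup>2 / 4))" for s
  proof -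
    define w where "w = (t, s * x, s *\<^sub>R z)"
    have "dderiv eta_psi (0, x, z) w = of_real x * dderiv eta_psi (0, 1, 0) w"
      using dderiv_coordinates_complex[OF smooth_eta_psi, of w 0 x z] eta_psi_dderiv_psi_eq_0[of w]
        eta_psi_dderiv_psi[where u=\<i> and w=w]
      by simp
    also have "dderiv eta_psi (0, 1, 0) w = \<i> * of_real (deriv (deriv tau0) t * (s * x) / 4 + deriv chi t / 2)"
      using eta_psi_dderiv_x[of w] xi_dderiv_t[of w] unfolding w_def by (simp add: field_simps)
    also have "of_real x * \<dots> = \<i> * of_real (deriv chi t * x / 2) + s *\<^sub>R (\<i> * of_real (deriv (deriv tau0) t * x\<^sup>2 / 4))"
      by (simp add: scaleR_conv_of_real power2_eq_square field_simps)
    finally show ?thesis by (simp add: w_def)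
  qed
  then have "eta_psi ((t, 0, 0) + (0, x, z)) = eta_psi (t, 0, 0) + \<i> * of_real (deriv chi t * x / 2)
      + (1/2) *\<^sub>R (\<i> * of_real (deriv (deriv tau0) t * x\<^sup>2 / 4))"
    by (rule line_increment_affine[OF smooth_eta_psi])
  then show ?thesis by (simp add: scaleR_conv_of_real field_simps)
qed

lemma eta_eq_linear: "eta (t, x, z) = eta (t, x, 0) + z * eta_psi (t, x, 0)"
proof -
  have "dderiv eta (0, 0, z) ((t, x, 0) + s *\<^sub>R (0, 0, z)) = z * eta_psi (t, x, 0)" for s
    using eta_dderiv_psi[where u=z and w="(t, x, s *\<^sub>R z)"] eta_psi_eq[of t x "s *\<^sub>R z"] eta_psi_eq[of t x 0]
    by simp
  then have "eta ((t, x, 0) + (0, 0, z)) = eta (t, x, 0) + z * eta_psi (t, x, 0)"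
    by (rule line_increment_const[OF smooth_eta])
  then show ?thesis by simp
qed

text \<open>What remains of the determining equation once \<open>\<psi>\<^sub>t = \<psi>\<^sub>x = \<psi>\<^sub>t\<^sub>x = 0\<close>.\<close>

lemma determining_equation_residual:
  "\<i> * dderiv eta (1, 0, 0) (t, x, z) + dderiv eta_x (0, 1, 0) (t, x, z)
    - V (t, x) * z * eta_psi (t, x, z) + V (t, x) * z * of_real (deriv tau0 t)
    + (of_real (tau (t, x, z)) * pt V (t, x) + of_real (xi (t, x, z)) * px V (t, x)) * z
    + V (t, x) * eta (t, x, z) = 0"
  using determining_equation[of t x z 0 0 0]
  unfolding prol_jet_def xi_dderiv2_x_psi eta_dderiv_psi[where u="- \<i> * 0 - V (t, x) * z"]
  by (simp add: dderiv_tau xi_dderiv_x_psi xi_dderiv_psi algebra_simps)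

definition rho :: "real \<Rightarrow> real" where "rho t = Re (eta_psi (t, 0, 0))"

definition sigma :: "real \<Rightarrow> real" where "sigma t = Im (eta_psi (t, 0, 0))"

definition eta0 :: "real \<times> real \<Rightarrow> complex" where "eta0 p = eta (fst p, snd p, 0)"

lemma smooth_rho: "smooth rho" and smooth_sigma: "smooth sigma"
proof -
  have "smooth (\<lambda>t. eta_psi (t, 0, 0))" by (rule smooth_compose[OF smooth_eta_psi smooth_time_axis])
  then show "smooth rho" "smooth sigma" unfolding rho_def[abs_def] sigma_def[abs_def]
    by (auto intro: smooth_compose[OF smooth_linear] bounded_linear_Re bounded_linear_Im)
qed

lemma smooth_eta0: "smooth eta0"
proof -
  have "smooth (\<lambda>q::real \<times> real. (fst q, snd q, 0::complex))"
    by (rule smooth_linear) (intro bounded_linear_Pair bounded_linear_fst bounded_linear_snd bounded_linear_zero)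
  then show ?thesis unfolding eta0_def[abs_def] by (rule smooth_compose[OF smooth_eta])
qed

definition eta1 :: "real \<Rightarrow> real \<Rightarrow> complex" where
  "eta1 t x = of_real (rho t) + \<i> * of_real (deriv (deriv tau0) t * x\<^sup>2 / 8 + deriv chi t * x / 2 + sigma t)"

lemma eta_eq_eta1: "eta (t, x, z) = eta0 (t, x) + z * eta1 t x"
  using eta_eq_linear[of t x z] eta_psi_eq[of t x 0]
  by (simp add: eta0_def eta1_def rho_def sigma_def complex_eq_iff algebra_simps)

lemma eta_eq:
  "eta (t, x, z) = \<i> * of_real (deriv (deriv tau0) t * x\<^sup>2 / 8 + deriv chi t * x / 2 + sigma t) * z
    + of_real (rho t) * z + eta0 (t, x)"
  by (simp add: eta_eq_eta1 eta1_def algebra_simps)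

lemma eta_dderiv_t:
  "dderiv eta (1, 0, 0) (t, x, z) = pt eta0 (t, x)
    + z * (of_real (deriv rho t) + \<i> * of_real (deriv (deriv (deriv tau0)) t * x\<^sup>2 / 8 + deriv (deriv chi) t * x / 2
      + deriv sigma t))"
proof -
  have "(\<lambda>s. eta ((0, x, z) + s *\<^sub>R (1, 0, 0))) = (\<lambda>s. eta0 (s, x) + z * eta1 s x)"
    by (simp add: eta_eq_eta1)
  moreover have "((\<lambda>s. eta0 (s, x) + z * eta1 s x) has_vector_derivative pt eta0 (t, x)
    + z * (of_real (deriv rho t) + \<i> * of_real (deriv (deriv (deriv tau0)) t * x\<^sup>2 / 8 + deriv (deriv chi) t * x / 2
      + deriv sigma t))) (at t)"
    unfolding eta1_def
    by (rule derivative_eq_intros has_vector_derivative_pt smooth_eta0 smooth_has_real_derivative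
         smooth_deriv smooth_tau0 smooth_chi smooth_sigma smooth_rho refl | simp add: algebra_simps)+
  ultimately show ?thesis using dderiv_line_eqI[OF smooth_eta, of "(0, x, z)" "(1, 0, 0)"] by simp
qed

lemma eta_dderiv_x:
  "dderiv eta (0, 1, 0) (t, x, z) = px eta0 (t, x) + z * (\<i> * of_real (deriv (deriv tau0) t * x / 4 + deriv chi t / 2))"
proof -
  have "(\<lambda>s. eta ((t, 0, z) + s *\<^sub>R (0, 1, 0))) = (\<lambda>s. eta0 (t, s) + z * eta1 t s)"
    by (simp add: eta_eq_eta1)
  moreover have "((\<lambda>s. eta0 (t, s) + z * eta1 t s) has_vector_derivative
      px eta0 (t, x) + z * (\<i> * of_real (deriv (deriv tau0) t * x / 4 + deriv chi t / 2))) (at x)"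
    unfolding eta1_def by (rule derivative_eq_intros has_vector_derivative_px smooth_eta0 refl | force)+
  ultimately show ?thesis using dderiv_line_eqI[OF smooth_eta, of "(t, 0, z)" "(0, 1, 0)"] by simp
qed

lemma eta_x_dderiv_x: "dderiv eta_x (0, 1, 0) (t, x, z) = px (px eta0) (t, x) + z * (\<i> * of_real (deriv (deriv tau0) t / 4))"
proof -
  have "(\<lambda>s. eta_x ((t, 0, z) + s *\<^sub>R (0, 1, 0)))
      = (\<lambda>s. px eta0 (t, s) + z * (\<i> * of_real (deriv (deriv tau0) t * s / 4 + deriv chi t / 2)))"
    by (simp add: eta_dderiv_x)
  moreover have "((\<lambda>s. px eta0 (t, s) + z * (\<i> * of_real (deriv (deriv tau0) t * s / 4 + deriv chi t / 2)))
      has_vector_derivative px (px eta0) (t, x) + z * (\<i> * of_real (deriv (deriv tau0) t / 4))) (at x)"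
    by (rule derivative_eq_intros has_vector_derivative_px smooth_px smooth_eta0 refl | force)+
  ultimately show ?thesis using dderiv_line_eqI[OF smooth_eta_x, of "(t, 0, z)" "(0, 1, 0)"] by simp
qed

lemma eta_psi_eq_eta1: "eta_psi (t, x, z) = eta1 t x"
  using eta_psi_eq[of t x z] by (simp add: eta1_def rho_def sigma_def complex_eq_iff)

text \<open>The residual determining equation is affine in \<open>\<psi>\<close>: its constant term says that \<open>\<eta>\<^sup>0\<close> solves
  the equation, its \<open>\<psi>\<close>-coefficient is the condition on the potential.\<close>

lemma determining_equation_residual_split:
  "schr V eta0 (t, x) + z * ((of_real (tau0 t) * pt V (t, x) + of_real (deriv tau0 t * x / 2 + chi t) * px V (t, x)
      + of_real (deriv tau0 t) * V (t, x))
    - (of_real (deriv (deriv (deriv tau0)) t * x\<^sup>2 / 8 + deriv (deriv chi) t * x / 2 + deriv sigma t)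
      - \<i> * of_real (deriv rho t) - \<i> / 4 * of_real (deriv (deriv tau0) t))) = 0"
  using determining_equation_residual[of t x z]
  unfolding eta_dderiv_t eta_x_dderiv_x eta_psi_eq_eta1 eta_eq_eta1 tau_eq xi_eq schr_def
  by (simp add: eta1_def algebra_simps)

lemma schr_eta0: "schr V eta0 p = 0"
  using determining_equation_residual_split[of "fst p" "snd p" 0] by simp

lemma potential_condition:
  "of_real (tau0 t) * pt V (t, x) + of_real (deriv tau0 t * x / 2 + chi t) * px V (t, x)
      + of_real (deriv tau0 t) * V (t, x)
    = of_real (deriv (deriv (deriv tau0)) t * x\<^sup>2 / 8 + deriv (deriv chi) t * x / 2 + deriv sigma t)
      - \<i> * of_real (deriv rho t) - \<i> / 4 * of_real (deriv (deriv tau0) t)"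
  using determining_equation_residual_split[of t x 1] schr_eta0[of "(t, x)"] by simp

end

subsection \<open>The classified vector fields are symmetries\<close>

definition lie_tau :: "(real \<Rightarrow> real) \<Rightarrow> real \<times> real \<times> complex \<Rightarrow> real" where
  "lie_tau T = (\<lambda>(t, x, \<psi>). T t)"

definition lie_xi :: "(real \<Rightarrow> real) \<Rightarrow> (real \<Rightarrow> real) \<Rightarrow> real \<times> real \<times> complex \<Rightarrow> real" where
  "lie_xi T chi = (\<lambda>(t, x, \<psi>). deriv T t * x / 2 + chi t)"

definition lie_eta ::
  "(real \<Rightarrow> real) \<Rightarrow> (real \<Rightarrow> real) \<Rightarrow> (real \<Rightarrow> real) \<Rightarrow> (real \<Rightarrow> real) \<Rightarrow> (real \<times> real \<Rightarrow> complex) \<Rightarrow>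
   real \<times> real \<times> complex \<Rightarrow> complex" where
  "lie_eta T chi \<sigma> \<rho> \<eta>0 = (\<lambda>(t, x, \<psi>).
     \<i> * of_real (deriv (deriv T) t * x\<^sup>2 / 8 + deriv chi t * x / 2 + \<sigma> t) * \<psi> + of_real (\<rho> t) * \<psi> + \<eta>0 (t, x))"

lemma smooth_lie_field:
  fixes T chi \<sigma> \<rho> :: "real \<Rightarrow> real"
  assumes "smooth T" "smooth chi" "smooth \<sigma>" "smooth \<rho>" "smooth \<eta>0"
  shows "smooth (lie_tau T)" "smooth (lie_xi T chi)" "smooth (lie_eta T chi \<sigma> \<rho> \<eta>0)"
proof -
  have t: "smooth (\<lambda>w::real \<times> real \<times> complex. fst w)" and x: "smooth (\<lambda>w::real \<times> real \<times> complex. fst (snd w))"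
    and z: "smooth (\<lambda>w::real \<times> real \<times> complex. snd (snd w))"
    and tx: "smooth (\<lambda>w::real \<times> real \<times> complex. (fst w, fst (snd w)))"
    by (auto intro!: smooth_linear bounded_linear_Pair bounded_linear_fst bounded_linear_snd
        bounded_linear_compose[OF bounded_linear_fst bounded_linear_snd]
        bounded_linear_compose[OF bounded_linear_snd bounded_linear_snd])
  have f: "smooth (\<lambda>w::real \<times> real \<times> complex. f (fst w))" if "smooth f" for f :: "real \<Rightarrow> real"
    by (rule smooth_compose[OF that t])
  have "lie_tau T = (\<lambda>w. T (fst w))" by (auto simp: lie_tau_def)
  then show "smooth (lie_tau T)" using f[OF assms(1)] by simp
  have "lie_xi T chi = (\<lambda>w. deriv T (fst w) * fst (snd w) * (1/2) + chi (fst w))"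
    by (auto simp: lie_xi_def)
  moreover have "smooth (\<lambda>w::real \<times> real \<times> complex. deriv T (fst w) * fst (snd w) * (1/2) + chi (fst w))"
    by (intro smooth_add smooth_mult smooth_const f smooth_deriv x assms)
  ultimately show "smooth (lie_xi T chi)" by simp
  have "lie_eta T chi \<sigma> \<rho> \<eta>0 = (\<lambda>w. \<i> * of_real (deriv (deriv T) (fst w) * (fst (snd w) * fst (snd w)) * (1/8)
          + deriv chi (fst w) * fst (snd w) * (1/2) + \<sigma> (fst w)) * snd (snd w)
        + of_real (\<rho> (fst w)) * snd (snd w) + \<eta>0 (fst w, fst (snd w)))"
    by (auto simp: lie_eta_def power2_eq_square)
  moreover have "smooth (\<lambda>w::real \<times> real \<times> complex. \<i> * of_real (deriv (deriv T) (fst w) * (fst (snd w) * fst (snd w)) * (1/8)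
          + deriv chi (fst w) * fst (snd w) * (1/2) + \<sigma> (fst w)) * snd (snd w)
        + of_real (\<rho> (fst w)) * snd (snd w) + \<eta>0 (fst w, fst (snd w)))"
    by (intro smooth_add smooth_mult smooth_const smooth_of_real f smooth_deriv x z
        smooth_compose[OF assms(5) tx] assms)
  ultimately show "smooth (lie_eta T chi \<sigma> \<rho> \<eta>0)" by simp
qed

lemma charact_lie_field:
  "charact (lie_tau T) (lie_xi T chi) (lie_eta T chi \<sigma> \<rho> \<eta>0) \<psi> (s, y) =
    \<i> * of_real (deriv (deriv T) s * y\<^sup>2 / 8 + deriv chi s * y / 2 + \<sigma> s) * \<psi> (s, y)
    + of_real (\<rho> s) * \<psi> (s, y) + \<eta>0 (s, y)
    - of_real (T s) * pt \<psi> (s, y) - of_real (deriv T s * y / 2 + chi s) * px \<psi> (s, y)"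
  by (simp add: charact_def lie_tau_def lie_xi_def lie_eta_def)

lemma pt_charact_lie_field:
  fixes T chi \<sigma> \<rho> :: "real \<Rightarrow> real"
  assumes "smooth T" "smooth chi" "smooth \<sigma>" "smooth \<rho>" "smooth \<eta>0" "smooth \<psi>"
  shows "pt (charact (lie_tau T) (lie_xi T chi) (lie_eta T chi \<sigma> \<rho> \<eta>0) \<psi>) (t, x) =
      \<i> * of_real (deriv (deriv (deriv T)) t * x\<^sup>2 / 8 + deriv (deriv chi) t * x / 2 + deriv \<sigma> t) * \<psi> (t, x)
      + \<i> * of_real (deriv (deriv T) t * x\<^sup>2 / 8 + deriv chi t * x / 2 + \<sigma> t) * pt \<psi> (t, x)
      + of_real (deriv \<rho> t) * \<psi> (t, x) + of_real (\<rho> t) * pt \<psi> (t, x) + pt \<eta>0 (t, x)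
      - of_real (deriv T t) * pt \<psi> (t, x) - of_real (T t) * pt (pt \<psi>) (t, x)
      - of_real (deriv (deriv T) t * x / 2 + deriv chi t) * px \<psi> (t, x)
      - of_real (deriv T t * x / 2 + chi t) * pt (px \<psi>) (t, x)"
  unfolding charact_lie_field
  by (rule pt_eqI, simp only: fst_conv snd_conv charact_lie_field,
      (rule derivative_eq_intros has_vector_derivative_pt smooth_pt smooth_px smooth_has_real_derivative
        smooth_deriv assms refl | force)+, simp add: algebra_simps)

lemma px_charact_lie_field:
  fixes T chi \<sigma> \<rho> :: "real \<Rightarrow> real"
  assumes "smooth T" "smooth chi" "smooth \<sigma>" "smooth \<rho>" "smooth \<eta>0" "smooth \<psi>"
  shows "px (charact (lie_tau T) (lie_xi T chi) (lie_eta T chi \<sigma> \<rho> \<eta>0) \<psi>) (t, x) =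
      \<i> * of_real (deriv (deriv T) t * x / 4 + deriv chi t / 2) * \<psi> (t, x)
      + \<i> * of_real (deriv (deriv T) t * x\<^sup>2 / 8 + deriv chi t * x / 2 + \<sigma> t) * px \<psi> (t, x)
      + of_real (\<rho> t) * px \<psi> (t, x) + px \<eta>0 (t, x) - of_real (T t) * px (pt \<psi>) (t, x)
      - of_real (deriv T t / 2) * px \<psi> (t, x) - of_real (deriv T t * x / 2 + chi t) * px (px \<psi>) (t, x)"
  by (rule px_eqI, simp only: fst_conv snd_conv charact_lie_field,
      (rule derivative_eq_intros has_vector_derivative_px[OF assms(6)]
        has_vector_derivative_px[OF smooth_pt[OF assms(6)]] has_vector_derivative_px[OF smooth_px[OF assms(6)]]
        has_vector_derivative_px[OF assms(5)] refl | force)+,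
      (simp add: algebra_simps)?)

lemma pxx_charact_lie_field:
  fixes T chi \<sigma> \<rho> :: "real \<Rightarrow> real"
  assumes "smooth T" "smooth chi" "smooth \<sigma>" "smooth \<rho>" "smooth \<eta>0" "smooth \<psi>"
  shows "px (px (charact (lie_tau T) (lie_xi T chi) (lie_eta T chi \<sigma> \<rho> \<eta>0) \<psi>)) (t, x) =
      \<i> * of_real (deriv (deriv T) t / 4) * \<psi> (t, x)
      + 2 * \<i> * of_real (deriv (deriv T) t * x / 4 + deriv chi t / 2) * px \<psi> (t, x)
      + \<i> * of_real (deriv (deriv T) t * x\<^sup>2 / 8 + deriv chi t * x / 2 + \<sigma> t) * px (px \<psi>) (t, x)
      + of_real (\<rho> t) * px (px \<psi>) (t, x) + px (px \<eta>0) (t, x)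
      - of_real (T t) * px (px (pt \<psi>)) (t, x) - of_real (deriv T t) * px (px \<psi>) (t, x)
      - of_real (deriv T t * x / 2 + chi t) * px (px (px \<psi>)) (t, x)"
  by (rule px_eqI, simp only: fst_conv snd_conv px_charact_lie_field[OF assms],
      (rule derivative_eq_intros has_vector_derivative_px[OF assms(6)]
        has_vector_derivative_px[OF smooth_px[OF assms(6)]] has_vector_derivative_px[OF smooth_px[OF smooth_px[OF assms(6)]]]
        has_vector_derivative_px[OF smooth_px[OF smooth_pt[OF assms(6)]]]
        has_vector_derivative_px[OF smooth_px[OF assms(5)]] refl | force)+,
      (simp add: algebra_simps)?)

lemma pt_px_px_commute:
  fixes f :: "real \<times> real \<Rightarrow> 'b::euclidean_space"
  assumes "smooth f"
  shows "pt (px (px f)) = px (px (pt f))"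
  by (simp add: pt_px_commute smooth_px smooth_pt assms)

lemma prol_E_lie_field:
  fixes T chi \<sigma> \<rho> :: "real \<Rightarrow> real"
  assumes "smooth T" "smooth chi" "smooth \<sigma>" "smooth \<rho>" "smooth \<eta>0" "smooth \<psi>"
  shows "prol_E V (lie_tau T) (lie_xi T chi) (lie_eta T chi \<sigma> \<rho> \<eta>0) \<psi> (t, x) =
    (\<i> * of_real (deriv (deriv T) t * x\<^sup>2 / 8 + deriv chi t * x / 2 + \<sigma> t) + of_real (\<rho> t) - of_real (deriv T t))
      * schr V \<psi> (t, x)
    + schr V \<eta>0 (t, x)
    + \<psi> (t, x) * ((of_real (T t) * pt V (t, x) + of_real (deriv T t * x / 2 + chi t) * px V (t, x)
        + of_real (deriv T t) * V (t, x))
      - (of_real (deriv (deriv (deriv T)) t * x\<^sup>2 / 8 + deriv (deriv chi) t * x / 2 + deriv \<sigma> t)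
        - \<i> * of_real (deriv \<rho> t) - \<i> / 4 * of_real (deriv (deriv T) t)))"
  unfolding prol_E_def Let_def pt_charact_lie_field[OF assms] pxx_charact_lie_field[OF assms] schr_def
    pt_px_commute[OF assms(6)] pt_px_px_commute[OF assms(6)]
  by (simp add: lie_tau_def lie_xi_def lie_eta_def algebra_simps power2_eq_square) (simp add: field_simps)

lemma in_lie_alg_lie_field:
  fixes T chi \<sigma> \<rho> :: "real \<Rightarrow> real"
  assumes smooth: "smooth T" "smooth chi" "smooth \<sigma>" "smooth \<rho>" "smooth \<eta>0"
    and potential: "\<And>t x. of_real (T t) * pt V (t, x) + of_real (deriv T t * x / 2 + chi t) * px V (t, x)
        + of_real (deriv T t) * V (t, x)
      = of_real (deriv (deriv (deriv T)) t * x\<^sup>2 / 8 + deriv (deriv chi) t * x / 2 + deriv \<sigma> t)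
        - \<i> * of_real (deriv \<rho> t) - \<i> / 4 * of_real (deriv (deriv T) t)"
    and solution: "\<And>p. schr V \<eta>0 p = 0"
  shows "in_lie_alg V (lie_tau T) (lie_xi T chi) (lie_eta T chi \<sigma> \<rho> \<eta>0)"
  unfolding in_lie_alg_def
proof (intro conjI smooth_lie_field[OF smooth] allI impI)
  fix \<psi> :: "real \<times> real \<Rightarrow> complex" and p :: "real \<times> real"
  assume "smooth \<psi>" and "schr V \<psi> p = 0"
  moreover obtain t x where "p = (t, x)" by (cases p)
  ultimately show "prol_E V (lie_tau T) (lie_xi T chi) (lie_eta T chi \<sigma> \<rho> \<eta>0) \<psi> p = 0"
    using prol_E_lie_field[OF smooth \<open>smooth \<psi>\<close>, of V t x] unfolding potential solution by simp
qed

lemma deriv_funpow_numeral: "(deriv ^^ 2) f = deriv (deriv f)" "(deriv ^^ 3) f = deriv (deriv (deriv f))"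
  by (simp_all add: numeral_eq_Suc)

definition lie_classified ::
  "(real \<times> real \<Rightarrow> complex) \<Rightarrow> (real \<times> real \<times> complex \<Rightarrow> real) \<Rightarrow> (real \<times> real \<times> complex \<Rightarrow> real) \<Rightarrow>
   (real \<times> real \<times> complex \<Rightarrow> complex) \<Rightarrow> bool" where
  "lie_classified V tau xi eta \<longleftrightarrow>
    (\<exists>(\<tau>::real \<Rightarrow> real) (chi::real \<Rightarrow> real) (\<sigma>::real \<Rightarrow> real) (\<rho>::real \<Rightarrow> real)
       (\<eta>0::real \<times> real \<Rightarrow> complex).
       smooth \<tau> \<and> smooth chi \<and> smooth \<sigma> \<and> smooth \<rho> \<and> smooth \<eta>0 \<and>
       (\<forall>t x. of_real (\<tau> t) * pt V (t, x)
              + of_real (deriv \<tau> t * x / 2 + chi t) * px V (t, x)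
              + of_real (deriv \<tau> t) * V (t, x)
            = of_real ((deriv ^^ 3) \<tau> t * x\<^sup>2 / 8 + (deriv ^^ 2) chi t * x / 2 + deriv \<sigma> t)
              - \<i> * of_real (deriv \<rho> t) - \<i> / 4 * of_real ((deriv ^^ 2) \<tau> t)) \<and>
       (\<forall>p. schr V \<eta>0 p = 0) \<and>
       (\<forall>t x \<psi>. tau (t, x, \<psi>) = \<tau> t) \<and>
       (\<forall>t x \<psi>. xi (t, x, \<psi>) = deriv \<tau> t * x / 2 + chi t) \<and>
       (\<forall>t x \<psi>. eta (t, x, \<psi>) =
           \<i> * of_real ((deriv ^^ 2) \<tau> t * x\<^sup>2 / 8 + deriv chi t * x / 2 + \<sigma> t) * \<psi>
           + of_real (\<rho> t) * \<psi> + \<eta>0 (t, x)))"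

lemma (in lie_symmetry) lie_classified: "lie_classified V tau xi eta"
  unfolding lie_classified_def deriv_funpow_numeral
  using smooth_tau0 smooth_chi smooth_sigma smooth_rho smooth_eta0 potential_condition schr_eta0
    tau_eq xi_eq eta_eq
  by blast

lemma lie_classified_imp_in_lie_alg:
  assumes "lie_classified V tau xi eta"
  shows "in_lie_alg V tau xi eta"
proof -
  obtain T chi \<sigma> \<rho> :: "real \<Rightarrow> real" and \<eta>0 where
    smooth: "smooth T" "smooth chi" "smooth \<sigma>" "smooth \<rho>" "smooth \<eta>0"
    and potential: "\<And>t x. of_real (T t) * pt V (t, x) + of_real (deriv T t * x / 2 + chi t) * px V (t, x)
        + of_real (deriv T t) * V (t, x)
      = of_real (deriv (deriv (deriv T)) t * x\<^sup>2 / 8 + deriv (deriv chi) t * x / 2 + deriv \<sigma> t)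
        - \<i> * of_real (deriv \<rho> t) - \<i> / 4 * of_real (deriv (deriv T) t)"
    and solution: "\<And>p. schr V \<eta>0 p = 0"
    and "tau = lie_tau T" "xi = lie_xi T chi" "eta = lie_eta T chi \<sigma> \<rho> \<eta>0"
    using assms unfolding lie_classified_def deriv_funpow_numeral
    by (auto simp: fun_eq_iff lie_tau_def lie_xi_def lie_eta_def)
  then show ?thesis using in_lie_alg_lie_field[OF smooth potential solution] by simp
qed

theorem theorem4:
  fixes V :: "real \<times> real \<Rightarrow> complex"
  assumes "smooth V"
  shows "in_lie_alg V tau xi eta \<longleftrightarrow>
    (\<exists>(\<tau>::real \<Rightarrow> real) (chi::real \<Rightarrow> real) (\<sigma>::real \<Rightarrow> real) (\<rho>::real \<Rightarrow> real)
       (\<eta>0::real \<times> real \<Rightarrow> complex).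
       smooth \<tau> \<and> smooth chi \<and> smooth \<sigma> \<and> smooth \<rho> \<and> smooth \<eta>0 \<and>
       (\<forall>t x. of_real (\<tau> t) * pt V (t, x)
              + of_real (deriv \<tau> t * x / 2 + chi t) * px V (t, x)
              + of_real (deriv \<tau> t) * V (t, x)
            = of_real ((deriv ^^ 3) \<tau> t * x\<^sup>2 / 8 + (deriv ^^ 2) chi t * x / 2 + deriv \<sigma> t)
              - \<i> * of_real (deriv \<rho> t) - \<i> / 4 * of_real ((deriv ^^ 2) \<tau> t)) \<and>
       (\<forall>p. schr V \<eta>0 p = 0) \<and>
       (\<forall>t x \<psi>. tau (t, x, \<psi>) = \<tau> t) \<and>
       (\<forall>t x \<psi>. xi (t, x, \<psi>) = deriv \<tau> t * x / 2 + chi t) \<and>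
       (\<forall>t x \<psi>. eta (t, x, \<psi>) =
           \<i> * of_real ((deriv ^^ 2) \<tau> t * x\<^sup>2 / 8 + deriv chi t * x / 2 + \<sigma> t) * \<psi>
           + of_real (\<rho> t) * \<psi> + \<eta>0 (t, x)))"
  unfolding lie_classified_def[symmetric]
  using lie_symmetry.lie_classified[of V tau xi eta] lie_classified_imp_in_lie_alg[of V tau xi eta]
  by (auto intro: lie_symmetry.intro)

end
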